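(* Let $\alpha=a/q+\beta$ with $a\in\mathbb{Z}$, $q\in\mathbb{N}$, $(a,q)=1$ and $|\beta|<1/q^2$. For $X\ge 2$, \[ \sum_{n\le X}|\mu(n)|\operatorname{e}(\alpha n)\ll \frac{X}{q}\log X+X^{\frac{8}{13}}(\log X)^{\frac{37}{13}}+q\log X. \]
   Context: $\operatorname{e}(x)=\exp(2\pi i x)$; $\mu$ is the Möbius function. $\ll$ denotes an inequality up to an absolute constant. *)

theory Defs
  imports "HOL-Analysis.Analysis" "HOL-Computational_Algebra.Squarefree"
begin

definition moebius_mu :: "nat \<Rightarrow> int" where
  "moebius_mu n = (if n \<noteq> 0 \<and> squarefree n then (-1) ^ card (prime_factors n) else 0)"

definition e :: "real \<Rightarrow> complex" where
  "e x = exp (2 * of_real pi * \<i> * of_real x)"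

end

theory Submission
  imports Defs "HOL-Analysis.Harmonic_Numbers"
begin

(*
  Since |mu(n)| = sum_{d^2 | n} mu(d), the sum equals sum_d mu(d) sum_{m <= N/d^2} e(alpha d^2 m),
  and each inner geometric sum is at most min(N/d^2, 1/||alpha d^2||).  Because alpha lies within
  1/q^2 of a/q, the points alpha k for q consecutive k are spaced like the fractions j/q, so
  sum_{k <= K} min(M, 1/||alpha k||) << (K/q + 1)(M + q log q).  This bounds directly the terms
  with 2 d^2 < q and every dyadic block d ~ P with P <= X^(3/10).  For larger P, Cauchy-Schwarz
  over m leaves sums of min(X/P^2, 1/||alpha (d1^2 - d2^2)||), and d1^2 - d2^2 = k has at most
  2 tau(k) << k^(1/65) solutions.  Each of the O(log X) blocks then contributes
  << X/q + X^(3/5 + 1/65) log X + q, and 3/5 + 1/65 = 8/13; the resulting (log X)^2 is at most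
  2 (log X)^(37/13).
*)

section \<open>Detecting squarefree numbers\<close>

lemma moebius_mu_prime_mult:
  assumes "prime p" "\<not> p dvd k" "k > 0"
  shows "moebius_mu (p * k) = - moebius_mu k"
proof -
  have "squarefree (p * k) \<longleftrightarrow> squarefree k"
    using assms squarefree_multD(2)[of p k] squarefree_prime
      squarefree_mult_coprime[OF prime_imp_coprime_nat] by blast
  moreover have "prime_factors (p * k) = insert p (prime_factors k)"
    using assms prime_factors_product[of p k] by (simp add: prime_prime_factors)
  moreover have "p \<notin> prime_factors k"
    using assms by auto
  ultimately show ?thesis
    using assms by (auto simp: moebius_mu_def)
qed

lemma moebius_mu_prime_mult_eq_0:
  assumes "prime p" "p dvd k"
  shows "moebius_mu (p * k) = 0"
proof -
  have "p\<^sup>2 dvd p * k" "\<not> is_unit p"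
    using assms by (auto simp: power2_eq_square)
  then have "\<not> squarefree (p * k)"
    unfolding squarefree_def by blast
  then show ?thesis
    by (simp add: moebius_mu_def)
qed

lemma abs_moebius_mu_le_1: "\<bar>moebius_mu n\<bar> \<le> 1"
  by (simp add: moebius_mu_def power_abs)

lemma finite_square_divisors:
  assumes "n > 0"
  shows "finite {d::nat. d\<^sup>2 dvd n}"
proof (rule finite_subset)
  show "{d. d\<^sup>2 dvd n} \<subseteq> {..n}"
  proof
    fix d assume "d \<in> {d. d\<^sup>2 dvd n}"
    then have "d\<^sup>2 \<le> n"
      using assms by (simp add: dvd_imp_le)
    moreover have "d \<le> d\<^sup>2"
      by (simp add: power2_eq_square le_square)
    ultimately show "d \<in> {..n}"
      by simp
  qed
qed simp

text \<open>Each \<open>d\<close> prime to \<open>p\<close> cancels against \<open>p d\<close>; the remaining \<open>d\<close> are divisible by \<open>p\<^sup>2\<close>.\<close>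
lemma sum_moebius_square_divisors_eq_0:
  assumes "n > 0" "prime p" "p\<^sup>2 dvd n"
  shows "(\<Sum>d\<in>{d. d\<^sup>2 dvd n}. moebius_mu d) = 0"
proof -
  define A where "A = {d. d\<^sup>2 dvd n}"
  define B where "B = {k. (p * k)\<^sup>2 dvd n}"
  have fin: "finite A"
    unfolding A_def using assms(1) by (rule finite_square_divisors)
  have inj: "inj_on ((*) p) B"
    using assms(2) by (auto simp: inj_on_def prime_gt_0_nat)
  have img: "{d\<in>A. p dvd d} = (*) p ` B"
    unfolding A_def B_def by (auto elim: dvdE)
  have "B \<subseteq> A"
    unfolding A_def B_def by (auto simp: power_mult_distrib dest: dvd_mult_right)
  then have finB: "finite B"
    using fin by (rule finite_subset)
  have coprime_part: "{k\<in>B. \<not> p dvd k} = {d\<in>A. \<not> p dvd d}"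
  proof (intro set_eqI iffI)
    fix k assume "k \<in> {k\<in>B. \<not> p dvd k}"
    then show "k \<in> {d\<in>A. \<not> p dvd d}"
      using \<open>B \<subseteq> A\<close> by blast
  next
    fix k assume "k \<in> {d\<in>A. \<not> p dvd d}"
    then have k: "k\<^sup>2 dvd n" "\<not> p dvd k"
      by (auto simp: A_def)
    then have "coprime (p\<^sup>2) (k\<^sup>2)"
      using prime_imp_coprime_nat[OF assms(2)] by simp
    then have "p\<^sup>2 * k\<^sup>2 dvd n"
      using divides_mult[OF assms(3) k(1)] by simp
    then show "k \<in> {k\<in>B. \<not> p dvd k}"
      using k(2) by (simp add: B_def power_mult_distrib)
  qed
  have "(\<Sum>d\<in>{d\<in>A. p dvd d}. moebius_mu d) = (\<Sum>k\<in>B. moebius_mu (p * k))"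
    unfolding img by (simp add: sum.reindex[OF inj])
  also have "\<dots> = (\<Sum>k\<in>{k\<in>B. \<not> p dvd k}. moebius_mu (p * k))"
    by (rule sum.mono_neutral_right) (use finB moebius_mu_prime_mult_eq_0[OF assms(2)] in auto)
  also have "\<dots> = (\<Sum>k\<in>{k\<in>B. \<not> p dvd k}. - moebius_mu k)"
  proof (rule sum.cong)
    fix k assume "k \<in> {k\<in>B. \<not> p dvd k}"
    moreover from this have "k > 0"
      using assms(1) by (auto simp: B_def intro!: gr0I)
    ultimately show "moebius_mu (p * k) = - moebius_mu k"
      using moebius_mu_prime_mult[OF assms(2)] by simp
  qed simp
  finally have "(\<Sum>d\<in>{d\<in>A. p dvd d}. moebius_mu d) = - (\<Sum>d\<in>{d\<in>A. \<not> p dvd d}. moebius_mu d)"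
    unfolding coprime_part by (simp add: sum_negf)
  moreover have "(\<Sum>d\<in>A. moebius_mu d) =
      (\<Sum>d\<in>{d\<in>A. p dvd d}. moebius_mu d) + (\<Sum>d\<in>{d\<in>A. \<not> p dvd d}. moebius_mu d)"
    using fin by (subst sum.union_disjoint[symmetric]) (auto intro: sum.cong)
  ultimately show ?thesis
    by (simp add: A_def)
qed

lemma abs_moebius_mu_eq_sum_square_divisors:
  assumes "n > 0"
  shows "\<bar>moebius_mu n\<bar> = (\<Sum>d\<in>{d. d\<^sup>2 dvd n}. moebius_mu d)"
proof (cases "squarefree n")
  case True
  then have "{d. d\<^sup>2 dvd n} = {1}"
    unfolding squarefree_def by auto
  then show ?thesis
    using True assms by (simp add: moebius_mu_def)
next
  case False
  then obtain p where "prime p" "p\<^sup>2 dvd n"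
    using squarefree_factorial_semiring[of n] assms by auto
  then show ?thesis
    using False assms sum_moebius_square_divisors_eq_0 by (simp add: moebius_mu_def)
qed

section \<open>Distance to the nearest integer\<close>

definition dist_to_int :: "real \<Rightarrow> real" where
  "dist_to_int x = \<bar>x - of_int (round x)\<bar>"

lemma dist_to_int_nonneg: "dist_to_int x \<ge> 0"
  by (simp add: dist_to_int_def)

lemma dist_to_int_le_half: "dist_to_int x \<le> 1/2"
  unfolding dist_to_int_def using of_int_round_abs_le[of x] by linarith

lemma dist_to_int_le: "dist_to_int x \<le> \<bar>x - of_int n\<bar>"
  unfolding dist_to_int_def by (rule round_diff_minimal)

lemma dist_to_int_0 [simp]: "dist_to_int 0 = 0"
  by (simp add: dist_to_int_def)

lemma dist_to_int_add_of_int: "dist_to_int (x + of_int n) = dist_to_int x"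
proof (rule antisym)
  show "dist_to_int (x + of_int n) \<le> dist_to_int x"
    using dist_to_int_le[of "x + of_int n" "round x + n"] by (simp add: dist_to_int_def)
  show "dist_to_int x \<le> dist_to_int (x + of_int n)"
    using dist_to_int_le[of x "round (x + of_int n) - n"] by (simp add: dist_to_int_def)
qed

lemma dist_to_int_minus: "dist_to_int (- x) = dist_to_int x"
proof (rule antisym)
  show "dist_to_int (- x) \<le> dist_to_int x"
    using dist_to_int_le[of "- x" "- round x"] by (simp add: dist_to_int_def)
  show "dist_to_int x \<le> dist_to_int (- x)"
    using dist_to_int_le[of x "- round (- x)"] by (simp add: dist_to_int_def)
qed

lemma dist_to_int_mult_abs: "dist_to_int (c * \<bar>x\<bar>) = dist_to_int (c * x)"
  by (cases "x \<ge> 0") (auto simp: dist_to_int_minus[of "c * x", symmetric])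

lemma dist_to_int_mult_square_diff:
  "dist_to_int (\<alpha> * real (x\<^sup>2) - \<alpha> * real (y\<^sup>2)) = dist_to_int (\<alpha> * real (nat \<bar>int (x\<^sup>2) - int (y\<^sup>2)\<bar>))"
proof -
  have "\<alpha> * real (x\<^sup>2) - \<alpha> * real (y\<^sup>2) = \<alpha> * (real (x\<^sup>2) - real (y\<^sup>2))"
    by (simp add: algebra_simps)
  moreover have "real (nat \<bar>int (x\<^sup>2) - int (y\<^sup>2)\<bar>) = \<bar>real (x\<^sup>2) - real (y\<^sup>2)\<bar>"
    by simp
  ultimately show ?thesis
    by (simp only: dist_to_int_mult_abs)
qed

lemma min_le_dist_to_int:
  assumes "0 \<le> x" "x \<le> 1"
  shows "min x (1 - x) \<le> dist_to_int x"
proof -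
  have "round x \<le> 0 \<or> round x \<ge> 1"
    by linarith
  then have "real_of_int (round x) \<le> 0 \<or> real_of_int (round x) \<ge> 1"
    by linarith
  then show ?thesis
    using assms unfolding dist_to_int_def by auto
qed

text \<open>\<open>min_inv M t\<close> is \<open>min M (1/t)\<close> read with \<open>1/0 = \<infinity>\<close>; the case split is needed since \<open>1/0 = 0\<close> in HOL.\<close>
definition min_inv :: "real \<Rightarrow> real \<Rightarrow> real" where
  "min_inv M t = (if t = 0 then M else min M (1 / t))"

lemma min_inv_le: "min_inv M t \<le> M"
  by (simp add: min_inv_def)

lemma min_inv_le_inverse: "t > 0 \<Longrightarrow> min_inv M t \<le> 1 / t"
  by (simp add: min_inv_def)

lemma min_inv_mono: "M \<le> M' \<Longrightarrow> min_inv M t \<le> min_inv M' t"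
  by (auto simp: min_inv_def)

lemma min_inv_nonneg: "M \<ge> 0 \<Longrightarrow> t \<ge> 0 \<Longrightarrow> min_inv M t \<ge> 0"
  by (auto simp: min_inv_def)

lemma min_inv_dist_to_int_le:
  assumes q: "q > 0" and x: "x = (s + \<rho>) / q + of_int t"
    and \<rho>: "lo \<le> \<rho>" "\<rho> \<le> hi" and s: "0 < s + lo" "s + hi < q"
  shows "min_inv M (dist_to_int x) \<le> q / (s + lo) + q / (q - s - hi)"
proof -
  define y where "y = (s + \<rho>) / q"
  have y: "(s + lo) / q \<le> y" "y \<le> (s + hi) / q"
    using \<rho> q by (auto simp: y_def divide_right_mono)
  have pos: "(s + lo) / q > 0" "(q - s - hi) / q > 0"
    using s q by auto
  have "(q - s - hi) / q \<le> 1 - y"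
    using y(2) q by (simp add: field_simps)
  then have "min ((s + lo) / q) ((q - s - hi) / q) \<le> min y (1 - y)"
    using y(1) by (auto simp: min_def)
  also have "\<dots> \<le> dist_to_int y"
  proof (rule min_le_dist_to_int)
    show "0 \<le> y"
      using y(1) pos(1) by linarith
    have "(s + hi) / q < 1"
      using s q by simp
    then show "y \<le> 1"
      using y(2) by linarith
  qed
  also have "dist_to_int y = dist_to_int x"
    by (simp add: x y_def dist_to_int_add_of_int)
  finally have min_le: "min ((s + lo) / q) ((q - s - hi) / q) \<le> dist_to_int x" .
  have min_pos: "min ((s + lo) / q) ((q - s - hi) / q) > 0"
    using pos by simp
  then have "min_inv M (dist_to_int x) \<le> 1 / dist_to_int x"
    using min_le by (intro min_inv_le_inverse) linarith
  also have "\<dots> \<le> 1 / min ((s + lo) / q) ((q - s - hi) / q)"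
    using min_le min_pos by (intro divide_left_mono) auto
  also have "\<dots> \<le> q / (s + lo) + q / (q - s - hi)"
    using pos s q by (auto simp: min_def)
  finally show ?thesis .
qed

section \<open>Exponential sums\<close>

lemma sin_ge_third:
  assumes "0 \<le> y" "y \<le> pi/2"
  shows "y / 3 \<le> sin y"
proof (cases "y \<le> pi/3")
  case True
  have "sin 0 - 0 * cos 0 \<le> sin y - y * cos y"
  proof (rule DERIV_nonneg_imp_nondecreasing[of 0 y "\<lambda>v. sin v - v * cos v"])
    fix v :: real assume v: "0 \<le> v" "v \<le> y"
    have "((\<lambda>v. sin v - v * cos v) has_real_derivative v * sin v) (at v)"
      by (auto intro!: derivative_eq_intros)
    moreover have "0 \<le> v * sin v"
      using v True pi_gt3 by (intro mult_nonneg_nonneg sin_ge_zero) auto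
    ultimately show "\<exists>d. ((\<lambda>v. sin v - v * cos v) has_real_derivative d) (at v) \<and> 0 \<le> d"
      by blast
  qed (use assms in auto)
  moreover have "cos (pi/3) \<le> cos y"
    using True assms by (intro cos_monotone_0_pi_le) auto
  then have "y / 2 \<le> y * cos y"
    using assms mult_left_mono[of "1/2" "cos y" y] by (simp add: cos_60)
  ultimately show ?thesis
    using assms by simp
next
  case False
  have "sin (pi/3) \<le> sin y"
    using False assms by (intro sin_monotone_2pi_le) auto
  moreover have "1.7 \<le> sqrt 3"
    by (rule real_le_rsqrt) (simp add: power2_eq_square)
  moreover have "y / 3 \<le> 0.7"
    using assms pi_less_4 by linarith
  ultimately show ?thesis
    by (simp add: sin_60)
qed

lemma e_add: "e (x + y) = e x * e y"
  unfolding e_def by (simp add: algebra_simps flip: exp_add)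

lemma e_of_int [simp]: "e (of_int n) = 1"
  unfolding e_def using exp_2pi_1_int[of n] by (simp add: algebra_simps)

lemma e_add_of_int: "e (x + of_int n) = e x"
  by (simp add: e_add)

lemma norm_e [simp]: "norm (e x) = 1"
  unfolding e_def by (simp add: mult.commute mult.left_commute norm_exp_i_times[of "2 * pi * x", simplified])

lemma cnj_e: "cnj (e x) = e (- x)"
  unfolding e_def by (simp add: exp_cnj)

lemma e_mult_cnj: "e x * cnj (e y) = e (x - y)"
  by (simp add: cnj_e e_add[symmetric])

lemma e_mult_of_nat: "e (\<theta> * real m) = e \<theta> ^ m"
  unfolding e_def by (simp add: algebra_simps flip: exp_of_nat_mult)

lemma norm_e_minus_1_ge: "2 * dist_to_int x \<le> norm (e x - 1)"
proof -
  define t where "t = x - of_int (round x)"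
  have t: "\<bar>t\<bar> \<le> 1/2" "dist_to_int x = \<bar>t\<bar>"
    using dist_to_int_le_half[of x] by (auto simp: t_def dist_to_int_def)
  have "e x = e t"
    using e_add_of_int[of t "round x"] by (simp add: t_def)
  then have "norm (e x - 1) = 2 * \<bar>sin (pi * t)\<bar>"
    unfolding e_def using dist_exp_i_1[of "2 * pi * t"] by (simp add: algebra_simps)
  also have "\<bar>sin (pi * t)\<bar> = sin (pi * \<bar>t\<bar>)"
  proof -
    have "sin (pi * \<bar>t\<bar>) \<ge> 0"
      using t by (intro sin_ge_zero) auto
    then show ?thesis
      by (cases "t \<ge> 0") simp_all
  qed
  finally have "norm (e x - 1) = 2 * sin (pi * \<bar>t\<bar>)" .
  moreover have "pi * \<bar>t\<bar> / 3 \<le> sin (pi * \<bar>t\<bar>)"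
    using t by (intro sin_ge_third) auto
  moreover have "\<bar>t\<bar> \<le> pi * \<bar>t\<bar> / 3"
    using pi_gt3 mult_right_mono[of 3 pi "\<bar>t\<bar>"] by simp
  ultimately show ?thesis
    using t by simp
qed

definition exp_sum :: "real \<Rightarrow> nat \<Rightarrow> complex" where
  "exp_sum \<theta> L = (\<Sum>m=1..L. e (\<theta> * real m))"

lemma norm_exp_sum_le: "norm (exp_sum \<theta> L) \<le> min_inv (real L) (dist_to_int \<theta>)"
proof -
  have trivial: "norm (exp_sum \<theta> L) \<le> real L"
    unfolding exp_sum_def using norm_sum[of "\<lambda>m. e (\<theta> * real m)" "{1..L}"] by simp
  show ?thesis
  proof (cases "dist_to_int \<theta> = 0")
    case True
    then show ?thesis
      using trivial by (simp add: min_inv_def)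
  next
    case False
    then have pos: "dist_to_int \<theta> > 0"
      using dist_to_int_nonneg[of \<theta>] by simp
    define z where "z = e \<theta>"
    have z: "2 * dist_to_int \<theta> \<le> norm (z - 1)" "norm z = 1"
      using norm_e_minus_1_ge by (simp_all add: z_def)
    then have "z \<noteq> 1"
      using pos by auto
    have "{1..L} = Suc ` {..<L}"
      using atLeast1_atMost_eq_remove0 lessThan_Suc_atMost image_Suc_lessThan by auto
    then have "exp_sum \<theta> L = (\<Sum>m\<in>Suc ` {..<L}. z ^ m)"
      unfolding exp_sum_def z_def e_mult_of_nat by simp
    also have "\<dots> = z * ((z ^ L - 1) / (z - 1))"
      using \<open>z \<noteq> 1\<close> by (simp add: sum.reindex sum_distrib_left[symmetric] geometric_sum)
    finally have "norm (exp_sum \<theta> L) = norm (z ^ L - 1) / norm (z - 1)"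
      using z by (simp add: norm_mult norm_divide)
    also have "\<dots> \<le> 2 / norm (z - 1)"
      using norm_triangle_ineq4[of "z ^ L" 1] z by (intro divide_right_mono) (auto simp: norm_power)
    also have "\<dots> \<le> 2 / (2 * dist_to_int \<theta>)"
      using z pos by (intro divide_left_mono mult_pos_pos) auto
    also have "\<dots> = 1 / dist_to_int \<theta>"
      by simp
    finally show ?thesis
      using trivial pos by (simp add: min_inv_def)
  qed
qed

lemma norm_sum_abs_moebius_e_le_card:
  "norm (\<Sum>n=1..N. of_int \<bar>moebius_mu n\<bar> * e (\<alpha> * real n)) \<le> real N"
proof -
  have "norm (of_int \<bar>moebius_mu n\<bar> * e (\<alpha> * real n)) \<le> 1" for n
    using abs_moebius_mu_le_1[of n] by (simp add: norm_mult)
  then have "norm (\<Sum>n=1..N. of_int \<bar>moebius_mu n\<bar> * e (\<alpha> * real n)) \<le> (\<Sum>n=1..N. 1)"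
    by (intro order_trans[OF norm_sum sum_mono])
  then show ?thesis
    by simp
qed

lemma sum_abs_moebius_e_eq:
  "(\<Sum>n=1..N. of_int \<bar>moebius_mu n\<bar> * e (\<alpha> * real n)) =
   (\<Sum>d=1..N. of_int (moebius_mu d) * exp_sum (\<alpha> * real (d\<^sup>2)) (N div d\<^sup>2))"
proof -
  have "of_int \<bar>moebius_mu n\<bar> * e (\<alpha> * real n) =
      (\<Sum>d\<in>{d\<in>{1..N}. d\<^sup>2 dvd n}. of_int (moebius_mu d) * e (\<alpha> * real n))" if n: "n \<in> {1..N}" for n
  proof -
    have "{d. d\<^sup>2 dvd n} = {d\<in>{1..N}. d\<^sup>2 dvd n}"
    proof (intro set_eqI iffI)
      fix d assume d: "d \<in> {d. d\<^sup>2 dvd n}"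
      then have "d \<le> n"
        using n by (auto dest!: dvd_imp_le intro: order_trans[OF le_square] simp: power2_eq_square)
      moreover have "d \<noteq> 0"
        using d n by (auto simp: power2_eq_square)
      ultimately show "d \<in> {d\<in>{1..N}. d\<^sup>2 dvd n}"
        using d n by auto
    qed auto
    then show ?thesis
      using abs_moebius_mu_eq_sum_square_divisors[of n] n by (simp add: sum_distrib_right)
  qed
  then have "(\<Sum>n=1..N. of_int \<bar>moebius_mu n\<bar> * e (\<alpha> * real n)) =
      (\<Sum>n=1..N. \<Sum>d\<in>{d\<in>{1..N}. d\<^sup>2 dvd n}. of_int (moebius_mu d) * e (\<alpha> * real n))"
    by (rule sum.cong[OF refl])
  also have "\<dots> = (\<Sum>d=1..N. \<Sum>n\<in>{n\<in>{1..N}. d\<^sup>2 dvd n}. of_int (moebius_mu d) * e (\<alpha> * real n))"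
    by (rule sum.swap_restrict) auto
  also have "\<dots> = (\<Sum>d=1..N. of_int (moebius_mu d) * exp_sum (\<alpha> * real (d\<^sup>2)) (N div d\<^sup>2))"
  proof (rule sum.cong[OF refl])
    fix d :: nat assume "d \<in> {1..N}"
    then have d2: "d\<^sup>2 > 0"
      by simp
    have "{n\<in>{1..N}. d\<^sup>2 dvd n} = (\<lambda>m. d\<^sup>2 * m) ` {1..N div d\<^sup>2}"
      using d2 by (auto simp: less_eq_div_iff_mult_less_eq mult.commute elim!: dvdE intro!: image_eqI)
    moreover have "inj_on (\<lambda>m. d\<^sup>2 * m) {1..N div d\<^sup>2}"
      using d2 by (auto simp: inj_on_def)
    ultimately show "(\<Sum>n\<in>{n\<in>{1..N}. d\<^sup>2 dvd n}. of_int (moebius_mu d) * e (\<alpha> * real n)) =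
        of_int (moebius_mu d) * exp_sum (\<alpha> * real (d\<^sup>2)) (N div d\<^sup>2)"
      by (simp add: sum.reindex exp_sum_def sum_distrib_left mult.assoc)
  qed
  finally show ?thesis .
qed

lemma sum_exp_sums_eq_sum_columns:
  assumes "\<And>d. d \<in> I \<Longrightarrow> L d \<le> M"
  shows "(\<Sum>d\<in>I. c d * exp_sum (\<theta> d) (L d))
    = (\<Sum>m=1..M. \<Sum>d\<in>I. if m \<le> L d then c d * e (\<theta> d * real m) else 0)"
proof -
  have "c d * exp_sum (\<theta> d) (L d) = (\<Sum>m=1..M. if m \<le> L d then c d * e (\<theta> d * real m) else 0)"
    if "d \<in> I" for d
  proof -
    have "{m\<in>{1..M}. m \<le> L d} = {1..L d}"
      using assms[OF that] by auto
    then have "c d * exp_sum (\<theta> d) (L d) = (\<Sum>m\<in>{m\<in>{1..M}. m \<le> L d}. c d * e (\<theta> d * real m))"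
      by (simp add: exp_sum_def sum_distrib_left)
    also have "\<dots> = (\<Sum>m=1..M. if m \<le> L d then c d * e (\<theta> d * real m) else 0)"
      by (rule sum.inter_filter) simp
    finally show ?thesis .
  qed
  then have "(\<Sum>d\<in>I. c d * exp_sum (\<theta> d) (L d))
      = (\<Sum>d\<in>I. \<Sum>m=1..M. if m \<le> L d then c d * e (\<theta> d * real m) else 0)"
    by (rule sum.cong[OF refl])
  also have "\<dots> = (\<Sum>m=1..M. \<Sum>d\<in>I. if m \<le> L d then c d * e (\<theta> d * real m) else 0)"
    by (rule sum.swap)
  finally show ?thesis .
qed

lemma sum_norm_columns_squared_eq:
  assumes "\<And>d. d \<in> I \<Longrightarrow> L d \<le> M"
  shows "complex_of_real (\<Sum>m=1..M. (norm (\<Sum>d\<in>I. if m \<le> L d then c d * e (\<theta> d * real m) else 0))\<^sup>2)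
    = (\<Sum>d1\<in>I. \<Sum>d2\<in>I. c d1 * cnj (c d2) * exp_sum (\<theta> d1 - \<theta> d2) (min (L d1) (L d2)))"
proof -
  define u where "u m d = (if m \<le> L d then c d * e (\<theta> d * real m) else 0)" for m d
  have "complex_of_real (\<Sum>m=1..M. (norm (\<Sum>d\<in>I. u m d))\<^sup>2)
      = (\<Sum>m=1..M. (\<Sum>d\<in>I. u m d) * cnj (\<Sum>d\<in>I. u m d))"
    by (simp only: of_real_sum complex_norm_square)
  also have "\<dots> = (\<Sum>m=1..M. \<Sum>d1\<in>I. \<Sum>d2\<in>I. u m d1 * cnj (u m d2))"
    by (simp add: sum_product cnj_sum)
  also have "\<dots> = (\<Sum>d1\<in>I. \<Sum>m=1..M. \<Sum>d2\<in>I. u m d1 * cnj (u m d2))"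
    by (rule sum.swap)
  also have "\<dots> = (\<Sum>d1\<in>I. \<Sum>d2\<in>I. \<Sum>m=1..M. u m d1 * cnj (u m d2))"
    by (rule sum.cong[OF refl], rule sum.swap)
  also have "\<dots> = (\<Sum>d1\<in>I. \<Sum>d2\<in>I. c d1 * cnj (c d2) * exp_sum (\<theta> d1 - \<theta> d2) (min (L d1) (L d2)))"
  proof (intro sum.cong[OF refl])
    fix d1 d2 assume "d1 \<in> I" "d2 \<in> I"
    have "u m d1 * cnj (u m d2) = (if m \<le> min (L d1) (L d2)
        then c d1 * cnj (c d2) * e ((\<theta> d1 - \<theta> d2) * real m) else 0)" for m
    proof -
      have "e ((\<theta> d1 - \<theta> d2) * real m) = e (\<theta> d1 * real m) * cnj (e (\<theta> d2 * real m))"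
        by (simp add: e_mult_cnj left_diff_distrib)
      then show ?thesis
        by (simp add: u_def mult_ac)
    qed
    moreover have "{m\<in>{1..M}. m \<le> min (L d1) (L d2)} = {1..min (L d1) (L d2)}"
      using assms[OF \<open>d1 \<in> I\<close>] by auto
    ultimately show "(\<Sum>m=1..M. u m d1 * cnj (u m d2)) =
        c d1 * cnj (c d2) * exp_sum (\<theta> d1 - \<theta> d2) (min (L d1) (L d2))"
      by (simp add: sum.inter_filter[symmetric] exp_sum_def sum_distrib_left)
  qed
  finally show ?thesis
    by (simp add: u_def)
qed

text \<open>Cauchy-Schwarz over \<open>m\<close> after exchanging the sums: the off-diagonal terms only see the
  differences \<open>\<theta> d\<^sub>1 - \<theta> d\<^sub>2\<close>.\<close>
lemma norm_sum_exp_sums_squared_le: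
  fixes c :: "'a \<Rightarrow> complex" and \<theta> :: "'a \<Rightarrow> real" and L :: "'a \<Rightarrow> nat"
  assumes "finite I" "\<And>d. d \<in> I \<Longrightarrow> norm (c d) \<le> 1" "\<And>d. d \<in> I \<Longrightarrow> L d \<le> M"
  shows "(norm (\<Sum>d\<in>I. c d * exp_sum (\<theta> d) (L d)))\<^sup>2
    \<le> real M * (\<Sum>d1\<in>I. \<Sum>d2\<in>I. min_inv (real M) (dist_to_int (\<theta> d1 - \<theta> d2)))"
proof -
  define U where "U m = (\<Sum>d\<in>I. if m \<le> L d then c d * e (\<theta> d * real m) else 0)" for m
  define T where "T d1 d2 = c d1 * cnj (c d2) * exp_sum (\<theta> d1 - \<theta> d2) (min (L d1) (L d2))" for d1 d2
  have columns: "complex_of_real (\<Sum>m=1..M. (norm (U m))\<^sup>2) = (\<Sum>d1\<in>I. \<Sum>d2\<in>I. T d1 d2)"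
    unfolding U_def T_def by (rule sum_norm_columns_squared_eq[OF assms(3)])
  have "(\<Sum>d\<in>I. c d * exp_sum (\<theta> d) (L d)) = (\<Sum>m=1..M. U m)"
    unfolding U_def by (rule sum_exp_sums_eq_sum_columns[OF assms(3)])
  then have "(norm (\<Sum>d\<in>I. c d * exp_sum (\<theta> d) (L d)))\<^sup>2 = (norm (\<Sum>m=1..M. U m))\<^sup>2"
    by simp
  also have "\<dots> \<le> (\<Sum>m=1..M. norm (U m))\<^sup>2"
    by (intro power_mono norm_sum) auto
  also have "\<dots> \<le> real M * (\<Sum>m=1..M. (norm (U m))\<^sup>2)"
    using sum_squared_le_sum_of_squares[of "\<lambda>m. norm (U m)" "{1..M}"] by (simp add: mult.commute)
  also have "(\<Sum>m=1..M. (norm (U m))\<^sup>2) = norm (complex_of_real (\<Sum>m=1..M. (norm (U m))\<^sup>2))"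
    using sum_nonneg[of "{1..M}" "\<lambda>m. (norm (U m))\<^sup>2"] by (simp only: norm_of_real abs_of_nonneg zero_le_power2)
  also have "\<dots> = norm (\<Sum>d1\<in>I. \<Sum>d2\<in>I. T d1 d2)"
    by (simp only: columns)
  also have "\<dots> \<le> (\<Sum>d1\<in>I. \<Sum>d2\<in>I. min_inv (real M) (dist_to_int (\<theta> d1 - \<theta> d2)))"
  proof (rule order_trans[OF norm_sum sum_mono[OF order_trans[OF norm_sum sum_mono]]])
    fix d1 d2 assume d: "d1 \<in> I" "d2 \<in> I"
    have "norm (T d1 d2) \<le> 1 * norm (exp_sum (\<theta> d1 - \<theta> d2) (min (L d1) (L d2)))"
      unfolding T_def norm_mult complex_mod_cnj using assms(2)[OF d(1)] assms(2)[OF d(2)]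
      by (intro mult_right_mono mult_le_one) auto
    also have "\<dots> \<le> min_inv (real (min (L d1) (L d2))) (dist_to_int (\<theta> d1 - \<theta> d2))"
      using norm_exp_sum_le by simp
    also have "\<dots> \<le> min_inv (real M) (dist_to_int (\<theta> d1 - \<theta> d2))"
      using assms(3)[OF d(1)] by (intro min_inv_mono) simp
    finally show "norm (T d1 d2) \<le> min_inv (real M) (dist_to_int (\<theta> d1 - \<theta> d2))" .
  qed
  finally show ?thesis
    by (simp add: mult_left_mono)
qed

lemma norm_moebius_exp_sum_le:
  assumes "real (N div d\<^sup>2) \<le> M"
  shows "norm (of_int (moebius_mu d) * exp_sum (\<alpha> * real (d\<^sup>2)) (N div d\<^sup>2))
    \<le> min_inv M (dist_to_int (\<alpha> * real (d\<^sup>2)))"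
proof -
  have "norm (of_int (moebius_mu d) * exp_sum (\<alpha> * real (d\<^sup>2)) (N div d\<^sup>2))
      \<le> 1 * norm (exp_sum (\<alpha> * real (d\<^sup>2)) (N div d\<^sup>2))"
    unfolding norm_mult using abs_moebius_mu_le_1[of d] by (intro mult_right_mono) auto
  also have "\<dots> \<le> min_inv M (dist_to_int (\<alpha> * real (d\<^sup>2)))"
    using norm_exp_sum_le min_inv_mono[OF assms] by (simp only: mult_1) (rule order_trans)
  finally show ?thesis .
qed

section \<open>The divisor bound\<close>

definition divisor_count :: "nat \<Rightarrow> nat" where
  "divisor_count n = card {d. d dvd n}"

lemma divisor_count_prime_power_mult_le:
  assumes "prime p" "m > 0"
  shows "divisor_count (p ^ a * m) \<le> (a + 1) * divisor_count m"
proof -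
  have "{d. d dvd p ^ a * m} \<subseteq> (\<lambda>(i, d). p ^ i * d) ` ({..a} \<times> {d. d dvd m})"
  proof
    fix d assume "d \<in> {d. d dvd p ^ a * m}"
    then obtain d1 d2 where "d = d1 * d2" "d1 dvd p ^ a" "d2 dvd m"
      using division_decomp by blast
    moreover from this obtain i where "i \<le> a" "d1 = p ^ i"
      using divides_primepow_nat[OF assms(1)] by blast
    ultimately show "d \<in> (\<lambda>(i, d). p ^ i * d) ` ({..a} \<times> {d. d dvd m})"
      by force
  qed
  moreover have fin: "finite ({..a} \<times> {d. d dvd m})"
    using assms(2) by simp
  ultimately have "divisor_count (p ^ a * m) \<le> card ((\<lambda>(i, d). p ^ i * d) ` ({..a} \<times> {d. d dvd m}))"
    unfolding divisor_count_def by (intro card_mono) auto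
  also have "\<dots> \<le> card ({..a} \<times> {d. d dvd m})"
    using fin by (rule card_image_le)
  finally show ?thesis
    by (simp add: card_cartesian_product divisor_count_def)
qed

lemma one_le_div_ln_2: "K \<ge> 1 \<Longrightarrow> 1 \<le> real K / ln 2"
  using ln_le_minus_one[of 2] by (simp add: field_simps)

lemma Suc_le_powr_prime_power:
  assumes "K \<ge> 1" "p \<ge> 2"
  shows "real (a + 1) \<le> real K / ln 2 * real p powr (real a / real K)"
proof -
  have "1 + real a * ln 2 / real K \<le> exp (real a * ln 2 / real K)"
    by (rule exp_ge_add_one_self)
  also have "\<dots> = 2 powr (real a / real K)"
    by (simp add: powr_def)
  finally have "1 + real a * ln 2 / real K \<le> 2 powr (real a / real K)" .
  then have "real K / ln 2 * (1 + real a * ln 2 / real K) \<le> real K / ln 2 * 2 powr (real a / real K)"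
    by (intro mult_left_mono) auto
  moreover have "real K / ln 2 * (1 + real a * ln 2 / real K) = real K / ln 2 + real a"
    using assms(1) by (simp add: field_simps)
  ultimately have "real K / ln 2 + real a \<le> real K / ln 2 * 2 powr (real a / real K)"
    by simp
  also have "\<dots> \<le> real K / ln 2 * real p powr (real a / real K)"
    using assms by (intro mult_left_mono powr_mono2) auto
  finally show ?thesis
    using one_le_div_ln_2[OF assms(1)] by (simp only: of_nat_add of_nat_1)
qed

lemma Suc_le_powr_large_prime_power:
  assumes "K \<ge> 1" "p \<ge> 2 ^ K"
  shows "real (a + 1) \<le> real p powr (real a / real K)"
proof -
  have "real (a + 1) \<le> 2 ^ a"
    by (induction a) auto
  also have "(2::real) ^ a = (2 ^ K) powr (real a / real K)"
    using assms(1) by (simp add: powr_realpow[symmetric] powr_powr)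
  also have "\<dots> \<le> real p powr (real a / real K)"
    using assms by (intro powr_mono2) (auto simp: numeral_power_le_of_nat_cancel_iff)
  finally show ?thesis .
qed

lemma prime_power_factor_exists:
  fixes n :: nat
  assumes "n > 1"
  obtains p a m where "prime p" "a \<ge> 1" "\<not> p dvd m" "n = p ^ a * m" "0 < m" "m < n"
proof -
  obtain p where p: "prime p" "p dvd n"
    using assms prime_factor_nat by (metis not_less_iff_gr_or_eq)
  define a where "a = multiplicity p n"
  define m where "m = n div p ^ a"
  have n: "n = p ^ a * m"
    unfolding m_def a_def by (simp add: multiplicity_dvd)
  have "\<not> is_unit p"
    using p by auto
  then have "\<not> p dvd m"
    unfolding m_def a_def using multiplicity_decompose[of n p] assms by simp
  have "a \<ge> 1"
    unfolding a_def using p assms by (simp add: prime_multiplicity_gt_zero_iff Suc_le_eq)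
  then have "p ^ 1 \<le> p ^ a"
    using prime_gt_0_nat[OF p(1)] by (intro power_increasing) auto
  then have "p ^ a \<ge> 2"
    using prime_ge_2_nat[OF p(1)] by simp
  have "m > 0"
    using n assms by (cases "m = 0") auto
  moreover from this have "1 * m < p ^ a * m"
    using \<open>p ^ a \<ge> 2\<close> by (intro mult_strict_right_mono) auto
  ultimately show ?thesis
    using that p(1) \<open>a \<ge> 1\<close> \<open>\<not> p dvd m\<close> n by simp
qed

lemma card_small_prime_divisors_prime_power_mult:
  fixes p m B :: nat
  assumes "prime p" "a \<ge> 1" "\<not> p dvd m"
  shows "card {r. prime r \<and> r < B \<and> r dvd p ^ a * m}
    = card {r. prime r \<and> r < B \<and> r dvd m} + (if p < B then 1 else 0)"
proof -
  have "prime r \<Longrightarrow> r dvd p ^ a * m \<longleftrightarrow> r = p \<or> r dvd m" for r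
    using assms by (auto simp: prime_dvd_mult_iff prime_dvd_power_iff primes_dvd_imp_eq)
  then have "{r. prime r \<and> r < B \<and> r dvd p ^ a * m}
      = (if p < B then insert p {r. prime r \<and> r < B \<and> r dvd m} else {r. prime r \<and> r < B \<and> r dvd m})"
    using assms(1) by auto
  moreover have "finite {r. prime r \<and> r < B \<and> r dvd m}"
    by (rule finite_subset[of _ "{..<B}"]) auto
  moreover have "p \<notin> {r. prime r \<and> r < B \<and> r dvd m}"
    using assms(3) by auto
  ultimately show ?thesis
    by simp
qed

text \<open>Each prime power \<open>p\<^sup>a \<parallel> n\<close> contributes \<open>a + 1 \<le> p\<^sup>a\<^sup>/\<^sup>K\<close> when \<open>p \<ge> 2\<^sup>K\<close>, and at most the
  constant factor \<open>K / ln 2\<close> more for each of the finitely many smaller primes.\<close>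
lemma divisor_count_le_small_primes:
  assumes "K \<ge> 1" "n > 0"
  shows "real (divisor_count n)
    \<le> (real K / ln 2) ^ card {p. prime p \<and> p < 2 ^ K \<and> p dvd n} * real n powr (1 / real K)"
  using assms(2)
proof (induction n rule: less_induct)
  case (less n)
  define B where "B = real K / ln 2"
  define S where "S n = card {p. prime p \<and> p < 2 ^ K \<and> p dvd n}" for n :: nat
  show ?case
  proof (cases "n = 1")
    case True
    then have "S n = 0"
      by (auto simp: S_def card_eq_0_iff)
    then show ?thesis
      using True by (simp only: S_def) (simp add: divisor_count_def)
  next
    case False
    with less.prems have "n > 1"
      by simp
    then obtain p a m where p: "prime p" "a \<ge> 1" "\<not> p dvd m"
      and n: "n = p ^ a * m" and m: "0 < m" "m < n"
      by (rule prime_power_factor_exists)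
    define c where "c = (if p < 2 ^ K then B else 1)"
    have "B ^ S n = c * B ^ S m"
      using card_small_prime_divisors_prime_power_mult[OF p] by (simp add: S_def c_def n)
    have c: "real (a + 1) \<le> c * real p powr (real a / real K)"
      using Suc_le_powr_prime_power[OF assms(1)] Suc_le_powr_large_prime_power[OF assms(1)]
        prime_ge_2_nat[OF p(1)] by (simp add: c_def B_def not_less)
    have "real (divisor_count n) \<le> real (a + 1) * real (divisor_count m)"
      using divisor_count_prime_power_mult_le[OF p(1) m(1), of a] n by (metis of_nat_le_iff of_nat_mult)
    also have "\<dots> \<le> real (a + 1) * (B ^ S m * real m powr (1 / real K))"
      using less.IH[OF m(2) m(1)] by (intro mult_left_mono) (auto simp: B_def S_def)
    also have "\<dots> \<le> (c * real p powr (real a / real K)) * (B ^ S m * real m powr (1 / real K))"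
      using c one_le_div_ln_2[OF assms(1)] by (intro mult_right_mono) (auto simp: B_def)
    also have "\<dots> = B ^ S n * (real p powr (real a / real K) * real m powr (1 / real K))"
      unfolding \<open>B ^ S n = c * B ^ S m\<close> by (simp add: mult_ac)
    also have "real p powr (real a / real K) * real m powr (1 / real K) = real n powr (1 / real K)"
      using prime_gt_0_nat[OF p(1)] by (simp add: n powr_mult powr_realpow[symmetric] powr_powr)
    finally show ?thesis
      by (simp add: B_def S_def)
  qed
qed

theorem divisor_count_le_powr:
  assumes "K \<ge> 1" "n > 0"
  shows "real (divisor_count n) \<le> (real K / ln 2) ^ (2 ^ K) * real n powr (1 / real K)"
proof -
  have "card {p. prime p \<and> p < 2 ^ K \<and> p dvd n} \<le> card {..<(2::nat) ^ K}"
    by (intro card_mono) auto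
  then have "(real K / ln 2) ^ card {p. prime p \<and> p < 2 ^ K \<and> p dvd n} \<le> (real K / ln 2) ^ (2 ^ K)"
    using one_le_div_ln_2[OF assms(1)] by (intro power_increasing) auto
  then show ?thesis
    using divisor_count_le_small_primes[OF assms] by (simp add: mult_right_mono order_trans)
qed

lemma nat_abs_diff_squares:
  "nat \<bar>int (x\<^sup>2) - int (y\<^sup>2)\<bar> = nat \<bar>int x - int y\<bar> * (x + y)"
proof -
  have "int (x\<^sup>2) - int (y\<^sup>2) = (int x - int y) * int (x + y)"
    by (simp add: power2_eq_square algebra_simps)
  then have "\<bar>int (x\<^sup>2) - int (y\<^sup>2)\<bar> = \<bar>int x - int y\<bar> * int (x + y)"
    by (simp add: abs_mult)
  then show ?thesis
    by (simp only: nat_mult_distrib[OF abs_ge_zero] nat_int)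
qed

text \<open>\<open>(x, y) \<mapsto> (x < y, |x - y|)\<close> is injective on such pairs, and \<open>|x - y|\<close> divides \<open>|x\<^sup>2 - y\<^sup>2|\<close>.\<close>
lemma card_pairs_with_square_difference_le:
  assumes "k > 0" "A \<subseteq> {(x, y). x \<noteq> y \<and> nat \<bar>int (x\<^sup>2) - int (y\<^sup>2)\<bar> = k}"
  shows "card A \<le> 2 * divisor_count k"
proof -
  define f where "f = (\<lambda>(x::nat, y::nat). (x < y, nat \<bar>int x - int y\<bar>))"
  have A: "A \<subseteq> {(x, y). x \<noteq> y \<and> nat \<bar>int x - int y\<bar> * (x + y) = k}"
    using assms(2) by (simp only: nat_abs_diff_squares)
  have "inj_on f A"
  proof (rule inj_onI)
    fix p p' assume "p \<in> A" "p' \<in> A" "f p = f p'"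
    moreover obtain x y x' y' where "p = (x, y)" "p' = (x', y')"
      by fastforce
    ultimately have "(x, y) \<in> A" "(x', y') \<in> A" and sign: "(x < y) = (x' < y')"
      and diff: "nat \<bar>int x - int y\<bar> = nat \<bar>int x' - int y'\<bar>"
      by (auto simp: f_def)
    then have "x \<noteq> y" "nat \<bar>int x - int y\<bar> * (x + y) = nat \<bar>int x' - int y'\<bar> * (x' + y')"
      using subsetD[OF A \<open>(x, y) \<in> A\<close>] subsetD[OF A \<open>(x', y') \<in> A\<close>] by simp_all
    moreover have "nat \<bar>int x - int y\<bar> > 0"
      using \<open>x \<noteq> y\<close> by simp
    ultimately have "x + y = x' + y'"
      using diff by simp
    with sign diff show "p = p'"
      using \<open>p = (x, y)\<close> \<open>p' = (x', y')\<close> by (cases "x < y") (auto split: if_splits)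
  qed
  moreover have "f ` A \<subseteq> UNIV \<times> {u. u dvd k}"
    using A by (auto simp: f_def)
  moreover have "finite (UNIV \<times> {u. u dvd k} :: (bool \<times> nat) set)"
    using assms(1) by simp
  ultimately have "card A \<le> card (UNIV \<times> {u. u dvd k} :: (bool \<times> nat) set)"
    by (rule card_inj_on_le)
  then show ?thesis
    by (simp add: card_cartesian_product divisor_count_def)
qed

lemma nat_abs_diff_squares_mem:
  assumes "x \<in> {P..<2*P}" "y \<in> {P..<2*P}" "x \<noteq> y"
  shows "nat \<bar>int (x\<^sup>2) - int (y\<^sup>2)\<bar> \<in> {1..4*P\<^sup>2}"
proof -
  have "\<bar>int x - int y\<bar> \<le> int P" "x + y \<le> 4 * P"
    using assms by (auto simp: abs_le_iff)
  then have "nat \<bar>int x - int y\<bar> \<le> P" "x + y \<le> 4 * P" "1 \<le> nat \<bar>int x - int y\<bar>"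
    using assms(3) by (auto simp: nat_le_iff)
  then have "1 \<le> nat \<bar>int x - int y\<bar> * (x + y)" "nat \<bar>int x - int y\<bar> * (x + y) \<le> P * (4 * P)"
    using assms(3) by (auto intro: mult_le_mono)
  then show ?thesis
    by (simp only: nat_abs_diff_squares) (simp add: power2_eq_square mult_ac)
qed

text \<open>The exponent \<open>1/65\<close> is what turns the exponent \<open>3/5\<close> of the dyadic estimate below
  into \<open>3/5 + 1/65 = 8/13\<close>.\<close>
definition divisor_bound_const :: real where
  "divisor_bound_const = (65 / ln 2) ^ (2 ^ 65)"

lemma divisor_bound_const_ge_1: "divisor_bound_const \<ge> 1"
  unfolding divisor_bound_const_def using one_le_div_ln_2[of 65] by simp

lemma divisor_count_le: "n > 0 \<Longrightarrow> real (divisor_count n) \<le> divisor_bound_const * real n powr (1 / 65)"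
  using divisor_count_le_powr[of 65 n] by (simp add: divisor_bound_const_def)

lemma one_le_divisor_bound_powr:
  assumes "1 \<le> x"
  shows "1 \<le> 2 * divisor_bound_const * x powr (1 / 65)"
proof -
  have "1 * 1 \<le> divisor_bound_const * x powr (1 / 65)"
    using divisor_bound_const_ge_1 ge_one_powr_ge_zero[of x "1 / 65"] assms by (intro mult_mono) auto
  then show ?thesis
    by simp
qed

lemma two_divisor_count_le:
  assumes "k \<in> {1..4*P\<^sup>2}"
  shows "2 * real (divisor_count k) \<le> 2 * divisor_bound_const * (4 * (real P)\<^sup>2) powr (1 / 65)"
proof -
  have "real (divisor_count k) \<le> divisor_bound_const * real k powr (1 / 65)"
    using assms by (intro divisor_count_le) auto
  also have "\<dots> \<le> divisor_bound_const * (4 * (real P)\<^sup>2) powr (1 / 65)"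
    using assms divisor_bound_const_ge_1 by (intro mult_left_mono powr_mono2) (auto simp flip: of_nat_power)
  finally show ?thesis
    by simp
qed

section \<open>Elementary estimates\<close>

lemma harm_le_one_plus_ln: "harm n \<le> 1 + ln (real n)"
proof (cases n)
  case (Suc m)
  have "harm (Suc m) - ln (real (Suc m)) \<le> harm (Suc 0) - ln (real (Suc 0))"
    using decseq_harm_diff_ln unfolding monotone_on_def by (metis UNIV_I zero_le)
  then show ?thesis
    using Suc by (simp add: harm_def)
qed (simp add: harm_def)

lemma sum_divide_le_ln:
  assumes "c \<ge> 0"
  shows "(\<Sum>j=1..n. c / real j) \<le> c * (1 + ln (real n))"
proof -
  have "(\<Sum>j=1..n. c / real j) = c * harm n"
    by (simp add: harm_def sum_distrib_left divide_inverse)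
  then show ?thesis
    using harm_le_one_plus_ln[of n] assms by (simp add: mult_left_mono)
qed

lemma sum_le_sum_inj_on:
  fixes f :: "'a \<Rightarrow> real" and h :: "'b \<Rightarrow> real"
  assumes "finite T" "inj_on g S" "g ` S \<subseteq> T"
    and "\<And>s. s \<in> S \<Longrightarrow> f s \<le> h (g s)" "\<And>t. t \<in> T \<Longrightarrow> h t \<ge> 0"
  shows "(\<Sum>s\<in>S. f s) \<le> (\<Sum>t\<in>T. h t)"
proof -
  have "(\<Sum>s\<in>S. f s) \<le> (\<Sum>s\<in>S. h (g s))"
    using assms(4) by (rule sum_mono)
  also have "\<dots> = (\<Sum>t\<in>g ` S. h t)"
    using assms(2) by (simp add: sum.reindex)
  also have "\<dots> \<le> (\<Sum>t\<in>T. h t)"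
    using assms by (intro sum_mono2) auto
  finally show ?thesis .
qed

lemma sum_comp_le_card_fibres:
  fixes G :: "'b \<Rightarrow> real"
  assumes "finite A" "finite T" "g ` A \<subseteq> T"
    and "\<And>k. k \<in> T \<Longrightarrow> real (card {p\<in>A. g p = k}) \<le> R" "\<And>k. k \<in> T \<Longrightarrow> G k \<ge> 0"
  shows "(\<Sum>p\<in>A. G (g p)) \<le> R * (\<Sum>k\<in>T. G k)"
proof -
  have "(\<Sum>p\<in>A. G (g p)) = (\<Sum>k\<in>T. \<Sum>p\<in>{p\<in>A. g p = k}. G (g p))"
    using assms(1-3) by (rule sum.group[symmetric])
  also have "\<dots> = (\<Sum>k\<in>T. real (card {p\<in>A. g p = k}) * G k)"
    by simp
  also have "\<dots> \<le> (\<Sum>k\<in>T. R * G k)"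
    using assms(4,5) by (intro sum_mono mult_right_mono) auto
  finally show ?thesis
    by (simp add: sum_distrib_left)
qed

text \<open>In the next four lemmas \<open>v\<close> plays the role of \<open>X\<^sup>1\<^sup>/\<^sup>1\<^sup>0\<close>, \<open>P \<ge> X\<^sup>3\<^sup>/\<^sup>1\<^sup>0\<close> is the size of a dyadic
  block of \<open>d\<close>'s, and \<open>M \<le> X/P\<^sup>2\<close> bounds the lengths of the inner sums.\<close>
lemma dyadic_size_bounds:
  fixes v P M :: real
  assumes v: "v \<ge> 1" and P: "P \<ge> v ^ 3" and M: "0 \<le> M" "M \<le> v ^ 10 / P\<^sup>2"
  shows "P > 0" "P\<^sup>2 * M \<le> v ^ 10" "M \<le> v ^ 4" "P * M \<le> v ^ 7"
proof -
  have "1 \<le> v ^ 3"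
    using v by (rule one_le_power)
  then show "P > 0"
    using P by linarith
  have "v ^ 6 \<le> P\<^sup>2"
    using power_mono[OF P, of 2] v by (simp flip: power_mult)
  show "P\<^sup>2 * M \<le> v ^ 10"
    using M \<open>P > 0\<close> by (simp add: field_simps)
  show "M \<le> v ^ 4"
  proof -
    have "v ^ 10 / P\<^sup>2 \<le> v ^ 10 / v ^ 6"
      using \<open>v ^ 6 \<le> P\<^sup>2\<close> \<open>P > 0\<close> v by (intro divide_left_mono) auto
    moreover have "v ^ 10 / v ^ 6 = v ^ 4"
      by (simp add: divide_eq_eq flip: power_add)
    ultimately show ?thesis
      using M(2) by linarith
  qed
  show "P * M \<le> v ^ 7"
  proof -
    have "v ^ 3 * (P * M) \<le> P * (P * M)"
      using P M \<open>P > 0\<close> by (intro mult_right_mono) auto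
    also have "\<dots> \<le> v ^ 3 * v ^ 7"
      using \<open>P\<^sup>2 * M \<le> v ^ 10\<close> by (simp add: power2_eq_square mult.assoc flip: power_add)
    finally show ?thesis
      by (rule mult_left_le_imp_le) (use v in simp)
  qed
qed

lemma dyadic_term_powers_le:
  fixes v E L :: real
  assumes v: "v \<ge> 1" and E: "E \<ge> 1" and L: "L \<ge> 1"
  defines "Y \<equiv> v ^ 6 * E * L"
  shows "v ^ 12 \<le> Y\<^sup>2" "E * L * v ^ 10 \<le> Y\<^sup>2" "E\<^sup>2 * v ^ 8 \<le> Y\<^sup>2" "E * v ^ 8 \<le> Y\<^sup>2"
    "(E * L * v ^ 4)\<^sup>2 \<le> Y\<^sup>2"
proof -
  have EL: "1 \<le> E * L"
    using mult_mono[OF E L] E by simp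
  have EL2: "1 \<le> (E * L)\<^sup>2" "E * L \<le> (E * L)\<^sup>2" "E\<^sup>2 \<le> (E * L)\<^sup>2" "E \<le> E\<^sup>2"
  proof -
    show "1 \<le> (E * L)\<^sup>2"
      using EL by (simp add: one_le_power)
    show "E * L \<le> (E * L)\<^sup>2"
      using EL mult_left_mono[OF EL, of "E * L"] by (simp add: power2_eq_square)
    show "E\<^sup>2 \<le> (E * L)\<^sup>2"
      using E L mult_left_mono[OF L, of E] by (intro power_mono) auto
    show "E \<le> E\<^sup>2"
      using E mult_left_mono[OF E, of E] by (simp add: power2_eq_square)
  qed
  have v_mono: "v ^ 8 \<le> v ^ 12" "v ^ 10 \<le> v ^ 12"
    using v by (auto intro: power_increasing)
  have Y2: "Y\<^sup>2 = (E * L)\<^sup>2 * v ^ 12"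
    by (simp add: Y_def power_mult_distrib flip: power_mult)
  show "v ^ 12 \<le> Y\<^sup>2" "E * L * v ^ 10 \<le> Y\<^sup>2" and E2: "E\<^sup>2 * v ^ 8 \<le> Y\<^sup>2"
    unfolding Y2 using EL EL2 v_mono v by (auto intro: mult_mono)
  have "E * v ^ 8 \<le> E\<^sup>2 * v ^ 8"
    using EL2(4) v by (intro mult_right_mono) auto
  with E2 show "E * v ^ 8 \<le> Y\<^sup>2"
    by linarith
  have "(E * L * v ^ 4)\<^sup>2 = (E * L)\<^sup>2 * v ^ 8"
    by (simp add: power_mult_distrib flip: power_mult)
  then show "(E * L * v ^ 4)\<^sup>2 \<le> Y\<^sup>2"
    unfolding Y2 using v_mono by (simp add: mult_left_mono)
qed

lemma dyadic_q_terms_le: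
  fixes v P M q E L :: real
  assumes v: "v \<ge> 1" and M: "0 \<le> M" "M \<le> v ^ 4" "P\<^sup>2 * M \<le> v ^ 10"
    and q: "q \<ge> 1" and E: "E \<ge> 1" and L: "L \<ge> 1"
  shows "M * E * (4 * P\<^sup>2 / q) * (4 * M) + M * E * (2 * q * L)
    \<le> 8 * (v ^ 10 / q)\<^sup>2 + q\<^sup>2 + 9 * (v ^ 6 * E * L)\<^sup>2"
proof -
  note Y = dyadic_term_powers_le[OF v E L]
  have "M * E * (4 * P\<^sup>2 / q) * (4 * M) = 16 * E * M * (P\<^sup>2 * M) / q"
    by (simp add: field_simps)
  also have "\<dots> \<le> 16 * E * v ^ 4 * v ^ 10 / q"
    using M E q by (intro divide_right_mono mult_mono mult_left_mono) auto
  also have "\<dots> = 8 * (2 * (v ^ 10 / q) * (E * v ^ 4))"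
    by (simp add: field_simps)
  also have "\<dots> \<le> 8 * ((v ^ 10 / q)\<^sup>2 + (E * v ^ 4)\<^sup>2)"
    using sum_squares_bound[of "v ^ 10 / q" "E * v ^ 4"] by simp
  also have "(E * v ^ 4)\<^sup>2 = E\<^sup>2 * v ^ 8"
    by (simp add: power_mult_distrib flip: power_mult)
  finally have "M * E * (4 * P\<^sup>2 / q) * (4 * M) \<le> 8 * (v ^ 10 / q)\<^sup>2 + 8 * (v ^ 6 * E * L)\<^sup>2"
    using Y(3) by simp
  moreover have "M * E * (2 * q * L) \<le> q\<^sup>2 + (v ^ 6 * E * L)\<^sup>2"
  proof -
    have "M * E * (2 * q * L) = 2 * q * (E * L * M)"
      by (simp add: mult_ac)
    also have "\<dots> \<le> 2 * q * (E * L * v ^ 4)"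
      using M q E L by (intro mult_left_mono) auto
    also have "\<dots> \<le> q\<^sup>2 + (E * L * v ^ 4)\<^sup>2"
      using sum_squares_bound[of q "E * L * v ^ 4"] by simp
    finally show ?thesis
      using Y(5) by simp
  qed
  ultimately show ?thesis
    by simp
qed

lemma dyadic_bound_arith:
  fixes v P M q E L :: real
  assumes v: "v \<ge> 1" and P: "P \<ge> v ^ 3" and M: "0 \<le> M" "M \<le> v ^ 10 / P\<^sup>2"
    and q: "q \<ge> 1" and E: "E \<ge> 1" and L: "L \<ge> 1"
  shows "M * (P * M + E * ((4 * P\<^sup>2 / q + 1) * (4 * M + 2 * q * L)))
    \<le> (5 * (v ^ 10 / q + v ^ 6 * E * L + q))\<^sup>2"
proof -
  define A where "A = v ^ 10 / q"
  define Y where "Y = v ^ 6 * E * L"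
  note Y = dyadic_term_powers_le[OF v E L, folded Y_def]
  have size: "P > 0" "P\<^sup>2 * M \<le> v ^ 10" "M \<le> v ^ 4" "P * M \<le> v ^ 7"
    using dyadic_size_bounds[OF v P M] by auto
  have "M * (P * M) \<le> v ^ 4 * v ^ 7"
    using size M by (intro mult_mono) auto
  also have "\<dots> \<le> v ^ 12"
    using v by (simp flip: power_add) (intro power_increasing, auto)
  finally have "M * (P * M) \<le> Y\<^sup>2"
    using Y(1) by linarith
  moreover have "M * E * (4 * P\<^sup>2 / q) * (2 * q * L) \<le> 8 * Y\<^sup>2"
  proof -
    have "M * E * (4 * P\<^sup>2 / q) * (2 * q * L) = 8 * (E * L) * (P\<^sup>2 * M)"
      using q by (simp add: field_simps)
    also have "\<dots> \<le> 8 * (E * L) * v ^ 10"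
      using size E L by (intro mult_left_mono) auto
    finally show ?thesis
      using Y(2) by simp
  qed
  moreover have "M * E * (4 * M) \<le> 4 * Y\<^sup>2"
  proof -
    have "M * E * (4 * M) = 4 * (E * (M * M))"
      by (simp add: mult_ac)
    also have "\<dots> \<le> 4 * (E * (v ^ 4 * v ^ 4))"
      using size M E by (intro mult_left_mono mult_mono) auto
    also have "v ^ 4 * v ^ 4 = v ^ 8"
      by (simp flip: power_add)
    finally show ?thesis
      using Y(4) by linarith
  qed
  moreover have "M * E * (4 * P\<^sup>2 / q) * (4 * M) + M * E * (2 * q * L) \<le> 8 * A\<^sup>2 + q\<^sup>2 + 9 * Y\<^sup>2"
    unfolding A_def Y_def using dyadic_q_terms_le[OF v M(1) size(3,2) q E L] .
  moreover have "M * (P * M + E * ((4 * P\<^sup>2 / q + 1) * (4 * M + 2 * q * L)))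
      = M * (P * M) + M * E * (4 * P\<^sup>2 / q) * (4 * M) + M * E * (4 * P\<^sup>2 / q) * (2 * q * L)
        + M * E * (4 * M) + M * E * (2 * q * L)"
    by (simp add: algebra_simps)
  moreover have "0 \<le> A" "0 \<le> Y"
    using v q E L by (simp_all add: A_def Y_def)
  then have "8 * A\<^sup>2 + q\<^sup>2 + 22 * Y\<^sup>2 \<le> (5 * (A + Y + q))\<^sup>2"
    using q by (simp add: power2_eq_square algebra_simps)
  ultimately show ?thesis
    unfolding A_def Y_def by linarith
qed

lemma two_thirds_le_ln: "(X::real) \<ge> 2 \<Longrightarrow> 2/3 \<le> ln X"
  using ln2_ge_two_thirds ln_le_cancel_iff[of 2 X] by linarith

lemma add_one_le_three_ln:
  assumes "X \<ge> 2" "2 ^ K \<le> X"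
  shows "real K + 1 \<le> 3 * ln X"
proof -
  have "real K * ln 2 \<le> ln X"
    using assms ln_le_cancel_iff[of "2 ^ K" X] by (simp add: ln_realpow)
  moreover have "real K * (2/3) \<le> real K * ln 2"
    using ln2_ge_two_thirds by (intro mult_left_mono) auto
  ultimately show ?thesis
    using two_thirds_le_ln[OF assms(1)] by linarith
qed

lemma sq_le_two_powr:
  fixes x :: real
  assumes "2/3 \<le> x"
  shows "x\<^sup>2 \<le> 2 * x powr (37/13)"
proof -
  have "1/2 \<le> x powr (11/13)"
  proof (cases "x \<ge> 1")
    case False
    then have "x powr 1 \<le> x powr (11/13)"
      using assms by (intro powr_mono') auto
    then show ?thesis
      using assms by simp
  qed (use ge_one_powr_ge_zero[of x "11/13"] in simp)
  then have "x\<^sup>2 * (1/2) \<le> x\<^sup>2 * x powr (11/13)"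
    by (intro mult_left_mono) auto
  also have "x\<^sup>2 * x powr (11/13) = x powr 2 * x powr (11/13)"
    using assms by (simp add: powr_realpow)
  also have "\<dots> = x powr (37/13)"
    by (simp only: powr_add[symmetric]) simp
  finally show ?thesis
    by simp
qed

lemma ln_mult_dyadic_term_le:
  fixes X C :: real
  assumes X: "X \<ge> 2" and C: "C \<ge> 1"
  shows "ln X * (X powr (3/5) * (2 * C * (4 * X) powr (1/65)) * (1 + ln X))
    \<le> 24 * (C * (X powr (8/13) * (ln X) powr (37/13)))"
proof -
  define l where "l = ln X"
  have l: "2/3 \<le> l"
    unfolding l_def using X by (rule two_thirds_le_ln)
  have "(4 * X) powr (1/65) \<le> 2 * X powr (1/65)"
  proof -
    have "(4::real) powr (1/65) \<le> 4 powr (1/2)"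
      by (intro powr_mono) auto
    also have "(4::real) powr (1/2) = 2"
      by (simp add: powr_half_sqrt)
    finally show ?thesis
      using X by (simp add: powr_mult mult_right_mono)
  qed
  then have "2 * C * (4 * X) powr (1/65) \<le> 4 * C * X powr (1/65)"
    using C mult_left_mono[of "(4 * X) powr (1/65)" "2 * X powr (1/65)" "2 * C"] by simp
  then have "X powr (3/5) * (2 * C * (4 * X) powr (1/65)) \<le> X powr (3/5) * (4 * C * X powr (1/65))"
    by (rule mult_left_mono) simp
  moreover have "1 + l \<le> 3 * l"
    using l by linarith
  ultimately have "X powr (3/5) * (2 * C * (4 * X) powr (1/65)) * (1 + l)
      \<le> X powr (3/5) * (4 * C * X powr (1/65)) * (3 * l)"
    by (rule mult_mono) (use C l in auto)
  also have "\<dots> = 12 * C * (X powr (3/5) * X powr (1/65)) * l"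
    by (simp add: mult_ac)
  also have "X powr (3/5) * X powr (1/65) = X powr (8/13)"
    by (simp only: powr_add[symmetric]) simp
  finally have "l * (X powr (3/5) * (2 * C * (4 * X) powr (1/65)) * (1 + l))
      \<le> l * (12 * C * X powr (8/13) * l)"
    using l by (intro mult_left_mono) auto
  also have "\<dots> = 12 * C * X powr (8/13) * l\<^sup>2"
    by (simp add: power2_eq_square)
  also have "\<dots> \<le> 12 * C * X powr (8/13) * (2 * l powr (37/13))"
    using sq_le_two_powr[OF l] C by (intro mult_left_mono) auto
  finally show ?thesis
    by (simp add: l_def mult_ac)
qed

lemma main_bound_arith:
  fixes X q C :: real and K :: nat
  assumes X: "X \<ge> 2" and q: "1 \<le> q" "q \<le> X" and K: "2 ^ K \<le> X" and C: "C \<ge> 1"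
  shows "4 * q * (1 + ln q)
      + (real K + 1) * (48 * (X / q + X powr (3/5) * (2 * C * (4 * X) powr (1/65)) * (1 + ln X) + q))
    \<le> 5000 * C * (X / q * ln X + X powr (8/13) * (ln X) powr (37/13) + q * ln X)"
proof -
  define l where "l = ln X"
  define Y where "Y = X powr (3/5) * (2 * C * (4 * X) powr (1/65)) * (1 + l)"
  define T1 where "T1 = X / q * l"
  define T2 where "T2 = X powr (8/13) * l powr (37/13)"
  define T3 where "T3 = q * l"
  have l: "2/3 \<le> l" "ln q \<le> l" "0 \<le> ln q"
    using two_thirds_le_ln[OF X] q by (auto simp: l_def)
  have "0 \<le> Y"
    using C l by (simp add: Y_def)
  have Y: "l * Y \<le> 24 * (C * T2)"
    unfolding l_def Y_def T2_def using X C by (rule ln_mult_dyadic_term_le)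
  have T: "0 \<le> T1" "0 \<le> T2" "0 \<le> T3"
    using X q l by (auto simp: T1_def T2_def T3_def)
  have "4 * q * (1 + ln q) \<le> 12 * T3"
    using l q by (simp add: T3_def mult_left_mono)
  moreover have "(real K + 1) * (48 * (X / q + Y + q)) \<le> (3 * l) * (48 * (X / q + Y + q))"
    using add_one_le_three_ln[OF X K] X q \<open>0 \<le> Y\<close> unfolding l_def by (intro mult_right_mono) auto
  moreover have "(3 * l) * (48 * (X / q + Y + q)) = 144 * T1 + 144 * (l * Y) + 144 * T3"
    by (simp add: T1_def T3_def algebra_simps)
  ultimately have "4 * q * (1 + ln q) + (real K + 1) * (48 * (X / q + Y + q))
      \<le> 144 * T1 + 144 * (l * Y) + 156 * T3"
    by linarith
  also have "\<dots> \<le> 5000 * (C * T1) + 5000 * (C * T2) + 5000 * (C * T3)"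
    using Y T mult_right_mono[OF C, of T1] mult_right_mono[OF C, of T3] mult_nonneg_nonneg[of C T2] C
    by linarith
  also have "\<dots> = 5000 * C * (T1 + T2 + T3)"
    by (simp add: algebra_simps)
  finally show ?thesis
    by (simp only: T1_def T2_def T3_def Y_def l_def)
qed

section \<open>Sums over a rational approximation\<close>

locale rational_approximation =
  fixes a :: int and q :: nat and \<beta> \<alpha> :: real
  assumes q_pos: "q \<ge> 1" and coprime_a_q: "coprime a (int q)"
    and abs_beta_less: "\<bar>\<beta>\<bar> < 1 / (real q)\<^sup>2"
    and alpha_eq: "\<alpha> = real_of_int a / real q + \<beta>"
begin

lemma abs_beta_mult_q_q: "\<bar>\<beta>\<bar> * real q * real q < 1"
  using abs_beta_less q_pos by (simp add: field_simps power2_eq_square)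

lemma inj_on_mult_a_mod_q:
  "inj_on (\<lambda>k. nat ((a * int k + c) mod int q)) {b..<b+q}"
proof (rule inj_onI)
  fix k1 k2 assume k: "k1 \<in> {b..<b+q}" "k2 \<in> {b..<b+q}"
    and "nat ((a * int k1 + c) mod int q) = nat ((a * int k2 + c) mod int q)"
  then have "(a * int k1 + c) mod int q = (a * int k2 + c) mod int q"
    using q_pos by (simp add: nat_eq_iff2)
  then have "int q dvd a * (int k1 - int k2)"
    by (simp add: mod_eq_dvd_iff algebra_simps)
  then have "int q dvd int k1 - int k2"
    using coprime_a_q by (simp add: coprime_dvd_mult_right_iff coprime_commute)
  moreover have "\<bar>int k1 - int k2\<bar> < int q"
    using k by auto
  ultimately have "int k1 - int k2 = 0"
    using dvd_imp_le_int[of "int k1 - int k2" "int q"] by fastforce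
  then show "k1 = k2"
    by simp
qed

text \<open>The residue \<open>s\<close> of \<open>a k + c\<close> modulo \<open>q\<close> locates \<open>\<alpha> k\<close> modulo 1, up to the error \<open>q \<beta> k - c\<close>.\<close>
lemma min_inv_dist_to_int_mult_alpha_le:
  fixes c :: int and k :: nat
  defines "s \<equiv> real_of_int ((a * int k + c) mod int q)"
  assumes \<rho>: "lo \<le> real q * \<beta> * real k - of_int c" "real q * \<beta> * real k - of_int c \<le> hi"
    and s: "0 < s + lo" "s + hi < real q"
  shows "min_inv M (dist_to_int (\<alpha> * real k)) \<le> real q / (s + lo) + real q / (real q - s - hi)"
proof (rule min_inv_dist_to_int_le)
  define t where "t = (a * int k + c) div int q"
  have "real_of_int a * real k + of_int c = real q * of_int t + s"
    unfolding s_def t_def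
    by (metis div_mult_mod_eq of_int_add of_int_mult of_int_of_nat_eq mult.commute)
  then show "\<alpha> * real k = (s + (real q * \<beta> * real k - of_int c)) / real q + of_int t"
    unfolding alpha_eq using q_pos by (simp add: field_simps)
qed (use q_pos \<rho> s in auto)

lemma min_inv_dist_to_int_consecutive_le:
  assumes k: "k \<in> {b..<b+q}"
  defines "s \<equiv> nat ((a * int k + \<lfloor>real q * \<beta> * real b\<rfloor>) mod int q)"
  assumes s: "2 \<le> s" "s + 3 \<le> q"
  shows "min_inv M (dist_to_int (\<alpha> * real k)) \<le> real q / (real s - 1) + real q / (real q - real s - 2)"
proof -
  define c where "c = \<lfloor>real q * \<beta> * real b\<rfloor>"
  have "\<bar>real q * \<beta> * (real k - real b)\<bar> \<le> \<bar>\<beta>\<bar> * real q * real q"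
    using k by (simp add: abs_mult mult_left_mono)
  then have "\<bar>real q * \<beta> * (real k - real b)\<bar> < 1"
    using abs_beta_mult_q_q by linarith
  moreover have "0 \<le> real q * \<beta> * real b - of_int c" "real q * \<beta> * real b - of_int c < 1"
    unfolding c_def by linarith+
  moreover have "real q * \<beta> * real k - of_int c
      = (real q * \<beta> * real b - of_int c) + real q * \<beta> * (real k - real b)"
    by (simp add: algebra_simps)
  ultimately have \<rho>: "-1 \<le> real q * \<beta> * real k - of_int c" "real q * \<beta> * real k - of_int c \<le> 2"
    unfolding abs_less_iff by linarith+
  have "real_of_int ((a * int k + c) mod int q) = real s"
    using q_pos by (simp add: s_def c_def)
  moreover have "0 < real s + -1" "real s + 2 < real q"
    using s by auto
  ultimately show ?thesis
    using min_inv_dist_to_int_mult_alpha_le[OF \<rho>, of M] by simp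
qed

lemma sum_min_inv_consecutive_le:
  assumes "M \<ge> 0"
  shows "(\<Sum>k\<in>{b..<b+q}. min_inv M (dist_to_int (\<alpha> * real k))) \<le> 4 * M + 2 * real q * (1 + ln q)"
proof -
  define \<sigma> where "\<sigma> k = nat ((a * int k + \<lfloor>real q * \<beta> * real b\<rfloor>) mod int q)" for k
  define G where "G = {s. 2 \<le> s \<and> s + 3 \<le> q}"
  define \<psi> where "\<psi> s = (if s \<in> G then real q / (real s - 1) + real q / (real q - real s - 2) else M)" for s
  have "(\<Sum>k\<in>{b..<b+q}. min_inv M (dist_to_int (\<alpha> * real k))) \<le> (\<Sum>s<q. \<psi> s)"
  proof (rule sum_le_sum_inj_on[where g = \<sigma>])
    show "inj_on \<sigma> {b..<b+q}"
      unfolding \<sigma>_def by (rule inj_on_mult_a_mod_q)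
    show "\<sigma> ` {b..<b+q} \<subseteq> {..<q}"
      using q_pos by (auto simp: \<sigma>_def nat_less_iff)
    show "min_inv M (dist_to_int (\<alpha> * real k)) \<le> \<psi> (\<sigma> k)" if "k \<in> {b..<b+q}" for k
      using min_inv_dist_to_int_consecutive_le[OF that] min_inv_le[of M]
      by (auto simp: \<psi>_def G_def \<sigma>_def)
    show "\<psi> s \<ge> 0" for s
      using assms by (auto simp: \<psi>_def G_def)
  qed simp
  also have "\<dots> = (\<Sum>s\<in>{..<q} \<inter> G. real q / (real s - 1) + real q / (real q - real s - 2))
      + (\<Sum>s\<in>{..<q} - G. M)"
    unfolding \<psi>_def by (simp add: sum.If_cases Diff_eq)
  also have "(\<Sum>s\<in>{..<q} - G. M) \<le> 4 * M"
  proof -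
    have "card ({..<q} - G) \<le> card {0, 1, q - 2, q - 1}"
      by (intro card_mono) (auto simp: G_def)
    also have "\<dots> \<le> 4"
      by (simp add: card_insert_if)
    finally show ?thesis
      using assms by (simp add: mult_right_mono)
  qed
  also have "(\<Sum>s\<in>{..<q} \<inter> G. real q / (real s - 1) + real q / (real q - real s - 2))
      \<le> 2 * real q * (1 + ln q)"
  proof -
    have "(\<Sum>s\<in>{..<q} \<inter> G. real q / (real s - 1)) \<le> (\<Sum>j=1..q. real q / real j)"
      by (rule sum_le_sum_inj_on[where g = "\<lambda>s. s - 1"]) (auto simp: G_def inj_on_def of_nat_diff)
    moreover have "(\<Sum>s\<in>{..<q} \<inter> G. real q / (real q - real s - 2)) \<le> (\<Sum>j=1..q. real q / real j)"
      by (rule sum_le_sum_inj_on[where g = "\<lambda>s. q - s - 2"])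
        (auto simp: G_def inj_on_def of_nat_diff diff_diff_eq add.commute)
    moreover have "(\<Sum>j=1..q. real q / real j) \<le> real q * (1 + ln q)"
      by (rule sum_divide_le_ln) simp
    ultimately show ?thesis
      by (simp add: sum.distrib)
  qed
  finally show ?thesis
    by simp
qed

lemma sum_min_inv_le:
  assumes "M \<ge> 0"
  shows "(\<Sum>k=1..K. min_inv M (dist_to_int (\<alpha> * real k)))
    \<le> (real K / real q + 1) * (4 * M + 2 * real q * (1 + ln q))"
proof -
  define H where "H = K div q + 1"
  define f where "f k = min_inv M (dist_to_int (\<alpha> * real k))" for k :: nat
  have "K mod q < q"
    using q_pos by simp
  then have "K < H * q"
    using div_mult_mod_eq[of K q] unfolding H_def distrib_right by linarith
  then have "(\<Sum>k=1..K. f k) \<le> (\<Sum>k<H*q. f k)"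
    using assms by (intro sum_mono2) (auto simp: f_def intro: min_inv_nonneg dist_to_int_nonneg)
  also have "\<dots> = (\<Sum>h<H. \<Sum>k\<in>{h*q..<h*q+q}. f k)"
    by (rule sum.nat_group[symmetric])
  also have "\<dots> \<le> (\<Sum>h<H. 4 * M + 2 * real q * (1 + ln q))"
    unfolding f_def using sum_min_inv_consecutive_le[OF assms] by (intro sum_mono) auto
  also have "\<dots> \<le> (real K / real q + 1) * (4 * M + 2 * real q * (1 + ln q))"
  proof -
    have "real (K div q) \<le> real K / real q"
      by (rule of_nat_div_le_of_nat)
    moreover have "0 \<le> 4 * M + 2 * real q * (1 + ln q)"
      using assms q_pos by simp
    ultimately show ?thesis
      by (simp add: H_def mult_right_mono)
  qed
  finally show ?thesis
    by (simp add: f_def)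
qed

lemma mult_a_mod_q_bounds:
  assumes "1 \<le> k" "2 * k < q"
  shows "1 \<le> nat ((a * int k) mod int q)" "nat ((a * int k) mod int q) < q"
proof -
  have "\<not> int q dvd a * int k"
  proof
    assume "int q dvd a * int k"
    then have "q dvd k"
      using coprime_a_q by (simp add: coprime_dvd_mult_right_iff coprime_commute)
    then show False
      using assms by (auto dest: dvd_imp_le)
  qed
  then have "(a * int k) mod int q \<noteq> 0"
    by (simp add: dvd_eq_mod_eq_0)
  moreover have "0 \<le> (a * int k) mod int q" "(a * int k) mod int q < int q"
    using q_pos by auto
  ultimately show "1 \<le> nat ((a * int k) mod int q)" "nat ((a * int k) mod int q) < q"
    by auto
qed

lemma min_inv_dist_to_int_less_half_q_le:
  assumes k: "1 \<le> k" "2 * k < q"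
  defines "s \<equiv> nat ((a * int k) mod int q)"
  shows "min_inv M (dist_to_int (\<alpha> * real k)) \<le> 2 * real q / real s + 2 * real q / real (q - s)"
proof -
  have s: "1 \<le> s" "s < q"
    unfolding s_def using k by (rule mult_a_mod_q_bounds)+
  have "\<bar>real q * \<beta> * real k\<bar> \<le> \<bar>\<beta>\<bar> * real q * (real q / 2)"
    using k by (auto simp: abs_mult mult_left_mono)
  also have "\<dots> < 1/2"
    using abs_beta_mult_q_q by simp
  finally have \<rho>: "- (1/2) \<le> real q * \<beta> * real k - of_int 0" "real q * \<beta> * real k - of_int 0 \<le> 1/2"
    by auto
  have "real_of_int ((a * int k + 0) mod int q) = real s"
    using q_pos by (simp add: s_def)
  moreover have "0 < real s + - (1/2)" "real s + 1/2 < real q"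
    using s by auto
  ultimately have "min_inv M (dist_to_int (\<alpha> * real k))
      \<le> real q / (real s + - (1/2)) + real q / (real q - real s - 1/2)"
    using min_inv_dist_to_int_mult_alpha_le[OF \<rho>, of M] by simp
  also have "\<dots> \<le> real q / (real s / 2) + real q / ((real q - real s) / 2)"
    using s by (intro add_mono divide_left_mono) auto
  also have "\<dots> = 2 * real q / real s + 2 * real q / real (q - s)"
    using s by (simp add: of_nat_diff mult.commute)
  finally show ?thesis .
qed

lemma sum_min_inv_less_half_q_le:
  "(\<Sum>k | 1 \<le> k \<and> 2 * k < q. min_inv M (dist_to_int (\<alpha> * real k))) \<le> 4 * real q * (1 + ln q)"
proof -
  define F where "F = {k. 1 \<le> k \<and> 2 * k < q}"
  define \<sigma> where "\<sigma> k = nat ((a * int k) mod int q)" for k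
  have \<sigma>: "1 \<le> \<sigma> k" "\<sigma> k < q" if "k \<in> F" for k
    using that mult_a_mod_q_bounds by (auto simp: F_def \<sigma>_def)
  have "inj_on \<sigma> {0..<0+q}"
    unfolding \<sigma>_def using inj_on_mult_a_mod_q[of 0 0] by simp
  then have inj: "inj_on \<sigma> F"
    by (rule inj_on_subset) (auto simp: F_def)
  have "(\<Sum>k\<in>F. 2 * real q / \<sigma> k) \<le> (\<Sum>j=1..q. 2 * real q / real j)"
    by (rule sum_le_sum_inj_on[where g = \<sigma>]) (use inj \<sigma> in \<open>auto simp: less_imp_le_nat\<close>)
  moreover have "(\<Sum>k\<in>F. 2 * real q / (q - \<sigma> k)) \<le> (\<Sum>j=1..q. 2 * real q / real j)"
  proof (rule sum_le_sum_inj_on[where g = "\<lambda>k. q - \<sigma> k"])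
    show "inj_on (\<lambda>k. q - \<sigma> k) F"
      using inj \<sigma> unfolding inj_on_def by (metis diff_diff_cancel less_imp_le_nat)
  qed (use \<sigma> in \<open>auto simp: Suc_le_eq of_nat_diff\<close>)
  moreover have "(\<Sum>j=1..q. 2 * real q / real j) \<le> 2 * real q * (1 + ln q)"
    by (rule sum_divide_le_ln) simp
  moreover have "(\<Sum>k\<in>F. min_inv M (dist_to_int (\<alpha> * real k)))
      \<le> (\<Sum>k\<in>F. 2 * q / \<sigma> k + 2 * q / (q - \<sigma> k))"
    using min_inv_dist_to_int_less_half_q_le by (intro sum_mono) (auto simp: F_def \<sigma>_def)
  ultimately show ?thesis
    by (simp add: F_def sum.distrib)
qed

lemma sum_min_inv_square_differences_le:
  assumes "finite I" "I \<subseteq> {P..<2*P}" "M \<ge> 0"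
    and R: "\<And>k. k \<in> {1..4*P\<^sup>2} \<Longrightarrow> 2 * real (divisor_count k) \<le> R"
  shows "(\<Sum>d1\<in>I. \<Sum>d2\<in>I. min_inv M (dist_to_int (\<alpha> * real (d1\<^sup>2) - \<alpha> * real (d2\<^sup>2))))
    \<le> real P * M + R * (\<Sum>k=1..4*P\<^sup>2. min_inv M (dist_to_int (\<alpha> * real k)))"
proof -
  define g where "g = (\<lambda>(x::nat, y::nat). nat \<bar>int (x\<^sup>2) - int (y\<^sup>2)\<bar>)"
  define G where "G k = min_inv M (dist_to_int (\<alpha> * real k))" for k :: nat
  define F where "F = (\<lambda>(x::nat, y::nat). min_inv M (dist_to_int (\<alpha> * real (x\<^sup>2) - \<alpha> * real (y\<^sup>2))))"
  define Diag where "Diag = {p\<in>I \<times> I. fst p = snd p}"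
  define Off where "Off = {p\<in>I \<times> I. fst p \<noteq> snd p}"
  have fin: "finite Diag" "finite Off"
    using assms(1) by (auto simp: Diag_def Off_def)
  have G: "G k \<ge> 0" for k
    using assms(3) by (simp add: G_def min_inv_nonneg dist_to_int_nonneg)
  have "(\<Sum>d1\<in>I. \<Sum>d2\<in>I. min_inv M (dist_to_int (\<alpha> * real (d1\<^sup>2) - \<alpha> * real (d2\<^sup>2))))
      = (\<Sum>p\<in>Diag. F p) + (\<Sum>p\<in>Off. F p)"
  proof -
    have "I \<times> I = Diag \<union> Off" "Diag \<inter> Off = {}"
      by (auto simp: Diag_def Off_def)
    then show ?thesis
      using fin by (simp add: sum.cartesian_product F_def split_beta sum.union_disjoint[symmetric])
  qed
  also have "(\<Sum>p\<in>Diag. F p) \<le> real P * M"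
  proof -
    have "(\<Sum>p\<in>Diag. F p) = real (card Diag) * M"
      by (simp add: Diag_def F_def min_inv_def split_beta)
    moreover have "card Diag \<le> card {P..<2*P}"
      unfolding Diag_def using assms(2) by (intro card_inj_on_le[where f = fst]) (auto simp: inj_on_def)
    ultimately show ?thesis
      using assms(3) by (simp add: mult_right_mono)
  qed
  also have "(\<Sum>p\<in>Off. F p) = (\<Sum>p\<in>Off. G (g p))"
    by (simp only: F_def G_def g_def case_prod_beta dist_to_int_mult_square_diff)
  also have "\<dots> \<le> R * (\<Sum>k=1..4*P\<^sup>2. G k)"
  proof (rule sum_comp_le_card_fibres[OF fin(2)])
    show "g ` Off \<subseteq> {1..4*P\<^sup>2}"
    proof
      fix k assume "k \<in> g ` Off"
      then obtain x y where k: "k = g (x, y)" and "x \<in> I" "y \<in> I" "x \<noteq> y"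
        by (auto simp: Off_def)
      then have "x \<in> {P..<2*P}" "y \<in> {P..<2*P}"
        using assms(2) by blast+
      then show "k \<in> {1..4*P\<^sup>2}"
        unfolding k g_def case_prod_conv using \<open>x \<noteq> y\<close> by (rule nat_abs_diff_squares_mem)
    qed
    fix k assume k: "k \<in> {1..4*P\<^sup>2}"
    have "card {p\<in>Off. g p = k} \<le> 2 * divisor_count k"
      using k by (intro card_pairs_with_square_difference_le) (auto simp: Off_def g_def)
    then show "real (card {p\<in>Off. g p = k}) \<le> R"
      using R[OF k] by linarith
  qed (use G in auto)
  finally show ?thesis
    by (simp add: G_def)
qed

lemma norm_sum_dyadic_le_termwise:
  assumes P: "P \<ge> 1" and I: "I \<subseteq> {P..<2*P}" "I \<noteq> {}" "\<And>d. d \<in> I \<Longrightarrow> q \<le> 2 * d\<^sup>2"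
    and N: "real N \<le> X"
  shows "norm (\<Sum>d\<in>I. of_int (moebius_mu d) * exp_sum (\<alpha> * real (d\<^sup>2)) (N div d\<^sup>2))
    \<le> 48 * X / q + 24 * (real P)\<^sup>2 * (1 + ln q)"
proof -
  define M where "M = X / (real P)\<^sup>2"
  have "X \<ge> 0"
    using N of_nat_0_le_iff[of N] by linarith
  then have "M \<ge> 0"
    by (simp add: M_def)
  have "norm (\<Sum>d\<in>I. of_int (moebius_mu d) * exp_sum (\<alpha> * real (d\<^sup>2)) (N div d\<^sup>2))
      \<le> (\<Sum>d\<in>I. min_inv M (dist_to_int (\<alpha> * real (d\<^sup>2))))"
  proof (rule order_trans[OF norm_sum sum_mono])
    fix d assume "d \<in> I"
    then have "P \<le> d"
      using I by auto
    have "real (N div d\<^sup>2) \<le> real N / real (d\<^sup>2)"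
      by (rule of_nat_div_le_of_nat)
    also have "\<dots> \<le> X / (real P)\<^sup>2"
      using N P \<open>P \<le> d\<close> \<open>X \<ge> 0\<close> by (intro frac_le) (auto intro: power_mono)
    finally show "norm (of_int (moebius_mu d) * exp_sum (\<alpha> * real (d\<^sup>2)) (N div d\<^sup>2))
        \<le> min_inv M (dist_to_int (\<alpha> * real (d\<^sup>2)))"
      unfolding M_def by (rule norm_moebius_exp_sum_le)
  qed
  also have "\<dots> \<le> (\<Sum>k=1..4*P\<^sup>2. min_inv M (dist_to_int (\<alpha> * real k)))"
  proof (rule sum_le_sum_inj_on[where g = "\<lambda>d. d\<^sup>2"])
    show "inj_on (\<lambda>d::nat. d\<^sup>2) I"
      by (auto simp: inj_on_def)
    show "(\<lambda>d. d\<^sup>2) ` I \<subseteq> {1..4*P\<^sup>2}"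
      using I P power_strict_mono[of _ "2 * P" 2] by (force simp: power_mult_distrib)
  qed (use \<open>M \<ge> 0\<close> in \<open>auto intro: min_inv_nonneg dist_to_int_nonneg\<close>)
  also have "\<dots> \<le> (real (4 * P\<^sup>2) / q + 1) * (4 * M + 2 * real q * (1 + ln q))"
    using sum_min_inv_le[OF \<open>M \<ge> 0\<close>] by blast
  also have "\<dots> \<le> (12 * (real P)\<^sup>2 / q) * (4 * M + 2 * real q * (1 + ln q))"
  proof (rule mult_right_mono)
    obtain d where "d \<in> I"
      using I by blast
    then have "q \<le> 2 * d\<^sup>2" "d < 2 * P"
      using I by auto
    then have "q \<le> 8 * P\<^sup>2"
      using power_strict_mono[of d "2 * P" 2] by (simp add: power_mult_distrib)
    then have "real q \<le> 8 * (real P)\<^sup>2"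
      by (metis of_nat_le_iff of_nat_mult of_nat_numeral of_nat_power)
    then show "real (4 * P\<^sup>2) / q + 1 \<le> 12 * (real P)\<^sup>2 / q"
      using q_pos by (simp add: field_simps)
    show "0 \<le> 4 * M + 2 * real q * (1 + ln q)"
      using \<open>M \<ge> 0\<close> q_pos by simp
  qed
  also have "\<dots> = 48 * X / q + 24 * (real P)\<^sup>2 * (1 + ln q)"
    unfolding M_def using P q_pos by (simp add: field_simps)
  finally show ?thesis .
qed

lemma norm_sum_dyadic_squared_le:
  fixes N :: nat
  assumes P: "P \<ge> 1" and I: "I \<subseteq> {P..<2*P}"
    and R: "\<And>k. k \<in> {1..4*P\<^sup>2} \<Longrightarrow> 2 * real (divisor_count k) \<le> R"
  defines "M \<equiv> real (N div P\<^sup>2)"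
  shows "(norm (\<Sum>d\<in>I. of_int (moebius_mu d) * exp_sum (\<alpha> * real (d\<^sup>2)) (N div d\<^sup>2)))\<^sup>2
    \<le> M * (real P * M + R * ((4 * (real P)\<^sup>2 / q + 1) * (4 * M + 2 * real q * (1 + ln q))))"
proof -
  have fin: "finite I"
    using I by (rule finite_subset) simp
  have "M \<ge> 0" "R \<ge> 0"
    using R[of 1] P by (auto simp: M_def divisor_count_def)
  have "(norm (\<Sum>d\<in>I. of_int (moebius_mu d) * exp_sum (\<alpha> * real (d\<^sup>2)) (N div d\<^sup>2)))\<^sup>2
      \<le> M * (\<Sum>d1\<in>I. \<Sum>d2\<in>I. min_inv M (dist_to_int (\<alpha> * real (d1\<^sup>2) - \<alpha> * real (d2\<^sup>2))))"
    unfolding M_def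
  proof (rule norm_sum_exp_sums_squared_le[OF fin])
    show "norm (of_int (moebius_mu d) :: complex) \<le> 1" for d
      using abs_moebius_mu_le_1[of d] by simp
    show "N div d\<^sup>2 \<le> N div P\<^sup>2" if "d \<in> I" for d
      using that I P by (intro div_le_mono2) (auto intro: power_mono)
  qed
  also have "\<dots> \<le> M * (real P * M + R * (\<Sum>k=1..4*P\<^sup>2. min_inv M (dist_to_int (\<alpha> * real k))))"
    using sum_min_inv_square_differences_le[OF fin I \<open>M \<ge> 0\<close> R] \<open>M \<ge> 0\<close> by (intro mult_left_mono)
  also have "\<dots> \<le> M * (real P * M + R * ((4 * (real P)\<^sup>2 / q + 1) * (4 * M + 2 * real q * (1 + ln q))))"
    using sum_min_inv_le[OF \<open>M \<ge> 0\<close>, of "4 * P\<^sup>2"] \<open>M \<ge> 0\<close> \<open>R \<ge> 0\<close>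
    by (intro mult_left_mono add_left_mono) auto
  finally show ?thesis .
qed

lemma norm_sum_dyadic_le_large:
  assumes X: "real q \<le> X" "real N \<le> X" and v: "v \<ge> 1" "v ^ 10 = X" "v ^ 3 \<le> real P"
    and I: "I \<subseteq> {P..<2*P}"
  defines "E \<equiv> 2 * divisor_bound_const * (4 * X) powr (1 / 65)"
  shows "norm (\<Sum>d\<in>I. of_int (moebius_mu d) * exp_sum (\<alpha> * real (d\<^sup>2)) (N div d\<^sup>2))
    \<le> 5 * (X / q + v ^ 6 * E * (1 + ln X) + q)"
proof -
  define S where "S = norm (\<Sum>d\<in>I. of_int (moebius_mu d) * exp_sum (\<alpha> * real (d\<^sup>2)) (N div d\<^sup>2))"
  define W where "W = X / q + v ^ 6 * E * (1 + ln X) + q"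
  define M where "M = real (N div P\<^sup>2)"
  define R where "R = 2 * divisor_bound_const * (4 * (real P)\<^sup>2) powr (1 / 65)"
  have "P \<ge> 1"
    using v one_le_power[of v 3] by linarith
  have "1 \<le> X"
    using v one_le_power[of v 10] by linarith
  then have E: "E \<ge> 1"
    unfolding E_def by (intro one_le_divisor_bound_powr) simp
  have L: "1 + ln q \<le> 1 + ln X" "1 \<le> 1 + ln X"
    using X q_pos \<open>1 \<le> X\<close> by auto
  have W: "W \<ge> 0"
    using v E L q_pos \<open>1 \<le> X\<close> by (simp add: W_def)
  have "M \<ge> 0"
    by (simp add: M_def)
  have S2: "S\<^sup>2 \<le> M * (real P * M + R * ((4 * (real P)\<^sup>2 / q + 1) * (4 * M + 2 * real q * (1 + ln q))))"
    unfolding S_def M_def R_def using norm_sum_dyadic_squared_le[OF \<open>P \<ge> 1\<close> I two_divisor_count_le] .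
  show ?thesis
  proof (cases "M = 0")
    case True
    then show ?thesis
      using S2 W by (simp add: S_def W_def)
  next
    case False
    then have "P\<^sup>2 \<le> N"
      by (simp add: M_def div_eq_0_iff)
    then have "(real P)\<^sup>2 \<le> X"
      using X(2) by (metis of_nat_le_iff of_nat_power order_trans)
    then have "R \<le> E"
      unfolding R_def E_def using divisor_bound_const_ge_1 by (intro mult_left_mono powr_mono2) auto
    have "M \<le> real N / (real P)\<^sup>2"
      unfolding M_def by (metis of_nat_div_le_of_nat of_nat_power)
    moreover have "real N / (real P)\<^sup>2 \<le> X / (real P)\<^sup>2"
      using X(2) by (intro divide_right_mono) auto
    ultimately have "M \<le> v ^ 10 / (real P)\<^sup>2"
      using v(2) by simp
    have "R * ((4 * (real P)\<^sup>2 / q + 1) * (4 * M + 2 * real q * (1 + ln q)))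
        \<le> E * ((4 * (real P)\<^sup>2 / q + 1) * (4 * M + 2 * real q * (1 + ln X)))"
      using \<open>R \<le> E\<close> E L \<open>M \<ge> 0\<close> q_pos by (intro mult_mono mult_left_mono add_left_mono) auto
    then have "M * (real P * M + R * ((4 * (real P)\<^sup>2 / q + 1) * (4 * M + 2 * real q * (1 + ln q))))
        \<le> M * (real P * M + E * ((4 * (real P)\<^sup>2 / q + 1) * (4 * M + 2 * real q * (1 + ln X))))"
      using \<open>M \<ge> 0\<close> by (intro mult_left_mono add_left_mono)
    with S2 have "S\<^sup>2 \<le> M * (real P * M + E * ((4 * (real P)\<^sup>2 / q + 1) * (4 * M + 2 * real q * (1 + ln X))))"
      by (rule order_trans)
    also have "\<dots> \<le> (5 * W)\<^sup>2"
      using dyadic_bound_arith[OF v(1) v(3) \<open>M \<ge> 0\<close> \<open>M \<le> v ^ 10 / _\<close> _ E L(2)] q_pos v(2)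
      by (simp add: W_def)
    finally show ?thesis
      unfolding S_def W_def by (rule power2_le_imp_le) (use W in \<open>simp add: W_def\<close>)
  qed
qed

lemma norm_sum_dyadic_le:
  assumes X: "X \<ge> 2" "real q \<le> X" "real N \<le> X"
    and P: "P \<ge> 1" and I: "I \<subseteq> {P..<2*P}" "\<And>d. d \<in> I \<Longrightarrow> q \<le> 2 * d\<^sup>2"
  defines "E \<equiv> 2 * divisor_bound_const * (4 * X) powr (1 / 65)"
  shows "norm (\<Sum>d\<in>I. of_int (moebius_mu d) * exp_sum (\<alpha> * real (d\<^sup>2)) (N div d\<^sup>2))
    \<le> 48 * (X / q + X powr (3 / 5) * E * (1 + ln X) + q)"
proof -
  define S where "S = norm (\<Sum>d\<in>I. of_int (moebius_mu d) * exp_sum (\<alpha> * real (d\<^sup>2)) (N div d\<^sup>2))"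
  define v where "v = X powr (1 / 10)"
  define Y where "Y = v ^ 6 * E * (1 + ln X)"
  have v: "v \<ge> 1" "v ^ 10 = X" "v ^ 6 = X powr (3 / 5)"
    using X by (auto simp: v_def ge_one_powr_ge_zero powr_realpow[symmetric] powr_powr)
  have E: "E \<ge> 1"
    unfolding E_def using X by (intro one_le_divisor_bound_powr) simp
  have "0 \<le> ln q" "ln q \<le> ln X"
    using X q_pos by auto
  have "0 \<le> Y"
    using v E X by (simp add: Y_def)
  have "S \<le> 48 * (X / q + Y + q)"
  proof (cases "real P \<le> v ^ 3 \<and> I \<noteq> {}")
    case True
    then have "(real P)\<^sup>2 \<le> v ^ 6"
      using power_mono[of "real P" "v ^ 3" 2] by (simp flip: power_mult)
    moreover have "1 + ln X \<le> E * (1 + ln X)"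
      using E \<open>ln q \<le> ln X\<close> \<open>0 \<le> ln q\<close> by (simp add: mult_le_cancel_right1)
    then have "1 + ln q \<le> E * (1 + ln X)"
      using \<open>ln q \<le> ln X\<close> by linarith
    ultimately have "(real P)\<^sup>2 * (1 + ln q) \<le> v ^ 6 * (E * (1 + ln X))"
      using \<open>0 \<le> ln q\<close> by (intro mult_mono) auto
    moreover have "S \<le> 48 * (X / q) + 24 * ((real P)\<^sup>2 * (1 + ln q))"
      unfolding S_def using norm_sum_dyadic_le_termwise[OF P I(1) _ I(2) X(3)] True by (simp add: mult_ac)
    moreover have "v ^ 6 * (E * (1 + ln X)) = Y" "48 * (X / q + Y + q) = 48 * (X / q) + 48 * Y + 48 * q"
      by (simp_all add: Y_def mult_ac distrib_left)
    ultimately show ?thesis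
      using \<open>0 \<le> Y\<close> of_nat_0_le_iff[of q] by linarith
  next
    case False
    show ?thesis
    proof (cases "I = {}")
      case False
      with \<open>\<not> (real P \<le> v ^ 3 \<and> I \<noteq> {})\<close> have "v ^ 3 \<le> real P"
        by simp
      then have "S \<le> 5 * (X / q + Y + q)"
        unfolding S_def Y_def E_def using norm_sum_dyadic_le_large[OF X(2,3) v(1,2) _ I(1)] by blast
      also have "\<dots> \<le> 48 * (X / q + Y + q)"
        using \<open>0 \<le> Y\<close> X by (intro mult_right_mono) auto
      finally show ?thesis .
    qed (use \<open>0 \<le> Y\<close> X in \<open>simp add: S_def\<close>)
  qed
  then show ?thesis
    by (simp add: S_def Y_def v)
qed

lemma norm_sum_small_squares_le:
  "norm (\<Sum>d | d \<in> {1..N} \<and> 2 * d\<^sup>2 < q. of_int (moebius_mu d) * exp_sum (\<alpha> * real (d\<^sup>2)) (N div d\<^sup>2))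
    \<le> 4 * real q * (1 + ln q)"
proof -
  have "norm (\<Sum>d | d \<in> {1..N} \<and> 2 * d\<^sup>2 < q. of_int (moebius_mu d) * exp_sum (\<alpha> * real (d\<^sup>2)) (N div d\<^sup>2))
      \<le> (\<Sum>d | d \<in> {1..N} \<and> 2 * d\<^sup>2 < q. min_inv (real N) (dist_to_int (\<alpha> * real (d\<^sup>2))))"
    by (rule order_trans[OF norm_sum sum_mono], rule norm_moebius_exp_sum_le) simp
  also have "\<dots> \<le> (\<Sum>k | 1 \<le> k \<and> 2 * k < q. min_inv (real N) (dist_to_int (\<alpha> * real k)))"
  proof (rule sum_le_sum_inj_on[where g = "\<lambda>d. d\<^sup>2"])
    show "finite {k. 1 \<le> k \<and> 2 * k < q}"
      by (rule finite_subset[of _ "{..q}"]) auto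
    show "inj_on (\<lambda>d::nat. d\<^sup>2) {d. d \<in> {1..N} \<and> 2 * d\<^sup>2 < q}"
      by (auto simp: inj_on_def)
  qed (auto intro: min_inv_nonneg dist_to_int_nonneg)
  also have "\<dots> \<le> 4 * real q * (1 + ln q)"
    by (rule sum_min_inv_less_half_q_le)
  finally show ?thesis .
qed

lemma norm_sum_large_squares_le:
  assumes X: "X \<ge> 2" "real q \<le> X" "real N \<le> X"
  defines "W \<equiv> X / q + X powr (3/5) * (2 * divisor_bound_const * (4 * X) powr (1/65)) * (1 + ln X) + q"
  shows "norm (\<Sum>d | d \<in> {1..N} \<and> q \<le> 2 * d\<^sup>2. of_int (moebius_mu d) * exp_sum (\<alpha> * real (d\<^sup>2)) (N div d\<^sup>2))
    \<le> (real (floor_log N) + 1) * (48 * W)"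
proof -
  define D where "D = {d. d \<in> {1..N} \<and> q \<le> 2 * d\<^sup>2}"
  define f where "f d = of_int (moebius_mu d) * exp_sum (\<alpha> * real (d\<^sup>2)) (N div d\<^sup>2)" for d
  have "finite D"
    by (simp add: D_def)
  have "(\<Sum>d\<in>D. f d) = (\<Sum>j\<le>floor_log N. \<Sum>d | d \<in> D \<and> floor_log d = j. f d)"
    using \<open>finite D\<close> by (intro sum.group[symmetric]) (auto simp: D_def intro: floor_log_le_iff)
  then have "norm (\<Sum>d\<in>D. f d) \<le> (\<Sum>j\<le>floor_log N. norm (\<Sum>d | d \<in> D \<and> floor_log d = j. f d))"
    by (simp add: norm_sum)
  also have "\<dots> \<le> (\<Sum>j\<le>floor_log N. 48 * W)"
  proof (rule sum_mono)
    fix j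
    have block: "{d. d \<in> D \<and> floor_log d = j} \<subseteq> {2 ^ j..<2 * 2 ^ j}"
      using floor_log_exp2_le floor_log_exp2_gt by (force simp: D_def)
    show "norm (\<Sum>d | d \<in> D \<and> floor_log d = j. f d) \<le> 48 * W"
      unfolding f_def W_def by (rule norm_sum_dyadic_le[OF X _ block]) (auto simp: D_def)
  qed
  finally show ?thesis
    by (simp add: D_def f_def add.commute)
qed

lemma norm_sum_abs_moebius_e_le_split:
  assumes X: "X \<ge> 2" "real q \<le> X" and N: "real N \<le> X" "N \<ge> 1"
  shows "norm (\<Sum>n=1..N. of_int \<bar>moebius_mu n\<bar> * e (\<alpha> * real n))
    \<le> 4 * real q * (1 + ln q) + (real (floor_log N) + 1) * (48 * (X / q
      + X powr (3/5) * (2 * divisor_bound_const * (4 * X) powr (1/65)) * (1 + ln X) + q))"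
proof -
  define f where "f d = of_int (moebius_mu d) * exp_sum (\<alpha> * real (d\<^sup>2)) (N div d\<^sup>2)" for d
  have "{d. d \<in> {1..N} \<and> 2 * d\<^sup>2 < q} \<union> {d. d \<in> {1..N} \<and> q \<le> 2 * d\<^sup>2} = {1..N}"
    by auto
  then have "(\<Sum>n=1..N. of_int \<bar>moebius_mu n\<bar> * e (\<alpha> * real n))
      = (\<Sum>d \<in> {d. d \<in> {1..N} \<and> 2 * d\<^sup>2 < q} \<union> {d. d \<in> {1..N} \<and> q \<le> 2 * d\<^sup>2}. f d)"
    unfolding sum_abs_moebius_e_eq f_def by simp
  also have "\<dots> = (\<Sum>d | d \<in> {1..N} \<and> 2 * d\<^sup>2 < q. f d) + (\<Sum>d | d \<in> {1..N} \<and> q \<le> 2 * d\<^sup>2. f d)"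
    by (rule sum.union_disjoint) auto
  finally have "norm (\<Sum>n=1..N. of_int \<bar>moebius_mu n\<bar> * e (\<alpha> * real n))
      \<le> norm (\<Sum>d | d \<in> {1..N} \<and> 2 * d\<^sup>2 < q. f d) + norm (\<Sum>d | d \<in> {1..N} \<and> q \<le> 2 * d\<^sup>2. f d)"
    by (simp add: norm_triangle_ineq)
  also have "\<dots> \<le> 4 * real q * (1 + ln q) + (real (floor_log N) + 1) * (48 * (X / q
      + X powr (3/5) * (2 * divisor_bound_const * (4 * X) powr (1/65)) * (1 + ln X) + q))"
    unfolding f_def by (rule add_mono[OF norm_sum_small_squares_le norm_sum_large_squares_le[OF X N(1)]])
  finally show ?thesis .
qed

theorem norm_sum_abs_moebius_e_le:
  assumes X: "X \<ge> 2"
  shows "norm (\<Sum>n=1..nat \<lfloor>X\<rfloor>. of_int \<bar>moebius_mu n\<bar> * e (\<alpha> * real n))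
    \<le> 5000 * divisor_bound_const * (X / q * ln X + X powr (8/13) * (ln X) powr (37/13) + q * ln X)"
proof -
  define N where "N = nat \<lfloor>X\<rfloor>"
  have N: "real N \<le> X" "N \<ge> 1"
    using X by (auto simp: N_def le_nat_iff)
  have "2/3 \<le> ln X"
    using X by (rule two_thirds_le_ln)
  show ?thesis
  proof (cases "real q \<le> X")
    case False
    have "real q * (1/2) \<le> real q * ln X"
      using \<open>2/3 \<le> ln X\<close> by (intro mult_left_mono) auto
    then have "norm (\<Sum>n=1..N. of_int \<bar>moebius_mu n\<bar> * e (\<alpha> * real n)) \<le> 5000 * (1 * (q * ln X))"
      using norm_sum_abs_moebius_e_le_card[of \<alpha> N] False N(1) by linarith
    also have "\<dots> \<le> 5000 * (divisor_bound_const * (X / q * ln X + X powr (8/13) * (ln X) powr (37/13) + q * ln X))"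
      using divisor_bound_const_ge_1 X \<open>2/3 \<le> ln X\<close> by (intro mult_left_mono mult_mono) auto
    finally show ?thesis
      by (simp add: N_def)
  next
    case True
    have "2 ^ floor_log N \<le> N"
      using N(2) by (intro floor_log_exp2_le) simp
    then have "real (2 ^ floor_log N) \<le> X"
      using N(1) by (simp only: of_nat_le_iff[symmetric])
    then have "2 ^ floor_log N \<le> X"
      by simp
    with True have "4 * real q * (1 + ln q) + (real (floor_log N) + 1) * (48 * (X / q
        + X powr (3/5) * (2 * divisor_bound_const * (4 * X) powr (1/65)) * (1 + ln X) + q))
      \<le> 5000 * divisor_bound_const * (X / q * ln X + X powr (8/13) * (ln X) powr (37/13) + q * ln X)"
      using q_pos by (intro main_bound_arith[OF X] divisor_bound_const_ge_1) auto
    then show ?thesis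
      using norm_sum_abs_moebius_e_le_split[OF X True N] by (simp add: N_def)
  qed
qed

end

theorem theorem1p10:
  "\<exists>C::real. \<forall>(a::int) (q::nat) (\<beta>::real) (\<alpha>::real) (X::real).
     q \<ge> 1 \<longrightarrow> coprime a (int q) \<longrightarrow> \<bar>\<beta>\<bar> < 1 / (real q)^2 \<longrightarrow>
     \<alpha> = real_of_int a / real q + \<beta> \<longrightarrow> X \<ge> 2 \<longrightarrow>
     norm (\<Sum>n\<in>{1..nat \<lfloor>X\<rfloor>}. of_int \<bar>moebius_mu n\<bar> * e (\<alpha> * real n))
       \<le> C * (X / real q * ln X + X powr (8/13) * (ln X) powr (37/13) + real q * ln X)"
proof (intro exI allI impI)
  fix a :: int and q :: nat and \<beta> \<alpha> X :: real
  assume "q \<ge> 1" "coprime a (int q)" "\<bar>\<beta>\<bar> < 1 / (real q)^2" "\<alpha> = real_of_int a / real q + \<beta>"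
    and "X \<ge> 2"
  then interpret rational_approximation a q \<beta> \<alpha>
    by unfold_locales
  show "norm (\<Sum>n\<in>{1..nat \<lfloor>X\<rfloor>}. of_int \<bar>moebius_mu n\<bar> * e (\<alpha> * real n))
      \<le> (5000 * divisor_bound_const) * (X / real q * ln X + X powr (8/13) * (ln X) powr (37/13) + real q * ln X)"
    using norm_sum_abs_moebius_e_le[OF \<open>X \<ge> 2\<close>] by (simp add: mult.assoc)
qed

end
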